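(* In the setting of problem (CP1) and the prox-ADC method described in the context, suppose Assumptions 1–6 hold, the generated sequence $\{x^k\}$ is bounded, and $\partial^\infty_Af_p(x)=\{0\}$ for every $x\in\bigcap_{p=1}^m\operatorname{dom}F_p$ and every $p\in I_2$. Then for any $\bar\eta>0$, $\bar\beta>0$, $\bar k\in\mathbb{N}$ there is an integer $k_0\ge\bar k$ with $\max_{1\le p\le m}\sum_{k'\ge k_0}\widehat\alpha_p^{k'}+\epsilon_{k_0}\le\bar\beta$, $\delta_{k_0}/(\lambda+\ell_{k_0})\le\bar\beta$ and $\delta_{k_0}\le\bar\eta$; consequently $x^{k_0,i_{k_0}+1}$ is a $(\bar\eta\max\{1,\sqrt{2m}D\},\bar\beta,\bar k)$-weakly A-stationary point of (CP1), where $D=\sup_{k\in\mathbb{N}}\sup_{y\in Y^k(x^{k+1})}\|y\|$.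
   Context: Problem (CP1): integers $0\le m_1\le m$; $f_p:\mathbb{R}^n\to\mathbb{R}$; $\varphi_p:\mathbb{R}\to\mathbb{R}$ convex for $p\le m_1$; $\varphi_p=\delta_{(-\infty,0]}$ for $p>m_1$; $F_p=\varphi_p\circ f_p$. $I_1=\{p:\varphi_p$ nondecreasing$\}$, $I_2$ its complement. Monotonic decomposition $\varphi_p=\varphi_p^\uparrow+\varphi^\downarrow_p$: $(\varphi_p,0)$ if nondecreasing; $(0,\varphi_p)$ if nonincreasing; otherwise with minimizer $z^*$, $\varphi^\uparrow_p=\varphi_p(z^* )$ on $z\le z^*$, $\varphi_p$ on $z>z^*$; $\varphi_p^\downarrow=\varphi_p-\varphi_p(z^* )$ on $z\le z^*$, $0$ on $z>z^*$. Assumption 1: $f^k_p=g^k_p-h^k_p$ ($g^k_p,h^k_p:\mathbb{R}^n\to\mathbb{R}$ convex), $f_p^k$ epi-converges to $f_p$; $-\infty<\liminf_{x'\to x,k\to\infty}f_p^k(x')\le\limsup_{x'\to x,k\to\infty}f_p^k(x')<\infty$ $\forall x$; $\varphi_p\circ f_p^k$ epi-converges to $\varphi_p\circ f_p$. Assumption 2: $X^k=\{x:f^k_p(x)\le0,p>m_1\}$, $\alpha_p^k=\sup_{X^k}[f^{k+1}_p-f^k_p]_+$; there are $x^0$ and nonnegative $\widehat\alpha_p^k\ge\alpha_p^k$ ($p>m_1$), $\sum_{k'}\widehat\alpha_p^{k'}<\infty$, $f^0_p(x^0)\le-\sum_{k'}\widehat\alpha_p^{k'}$; $\widehat\alpha_p^k=0$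 for $p\le m_1$. Assumption 3: $\exists\ell_k>0$ with $\min\{\mathbb H(\partial g_p^k(x),\partial g_p^k(x')),\mathbb H(\partial h_p^k(x),\partial h_p^k(x'))\}\le\ell_k\|x-x'\|$ $\forall x,x',p$. Assumption 4: each $\sum_{p\le m_1}\varphi_p(f^k_p)+\sum_{p>m_1}\delta_{(-\infty,0]}(f_p^k)$ is level-bounded. Assumption 5: for every $\bar x\in\bigcap_p\operatorname{dom}F_p$, if $0=\sum_py_pv_p$ with $(y_p,v_p)\in(\bigcup\{\mathcal N_{\operatorname{dom}\varphi_p}(t):t\in T_p(\bar x)\}\times\operatorname{con}\partial_Af_p(\bar x))\cup(\mathbb{R}\times[\partial_A^\infty f_p(\bar x)\setminus\{0\}])$ for each $p$, then all $y_p=0$; $T_p(x)=\{t:\exists$ infinite $N$, $x^k\to x$, $f_p^k(x^k)\to_Nt\}$; $\partial_Af_p(\bar x)=\bigcup_{x^k\to\bar x}\operatorname{Lim\,sup}_k[\partial g^k_p(x^k)-\partial h^k_p(x^k)]$, $\partial^\infty_Af_p(\bar x)=\bigcup_{x^k\to\bar x}\operatorname{Lim\,sup}_k^\infty[\partial g^k_p(x^k)-\partial h^k_p(x^k)]$ (outer limit $\{u:\exists$ infinite $N$, $u^k\in C^k$, $u^k\to_Nu\}$, horizon outer limit $\{0\}\cup\{u:\exists$ infinite $N,\lambda_k\downarrow0,u^k\in C^k,\lambda_ku^k\to_Nu\}$). Method: $\lambda>0$; positive $\epsilon_k\downarrow0,\delta_k\downarrow0$ with $\delta_k/(\lambda+\ell_k)\downarrow0$;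 $\sigma^k_p=\sum_{k'\ge k}\widehat\alpha^{k'}_p$; at $y$ pick $a_p\in\partial h^k_p(y)$, $b_p\in\partial g^k_p(y)$; $f^{k,\mathrm{up}}_p(x;y)=g^k_p(x)-h^k_p(y)-a_p^\top(x-y)+\sigma^k_p$, $f^{k,\mathrm{lo}}_p(x;y)=g^k_p(y)+b_p^\top(x-y)-h^k_p(x)$, $\widehat F^k_p(x;y)=\varphi^\uparrow_p(f^{k,\mathrm{up}}_p(x;y))+\varphi^\downarrow_p(f^{k,\mathrm{lo}}_p(x;y))$. Subproblem at $y$: $\operatorname{argmin}\{\sum_{p\le m_1}\widehat F_p^k(x;y)+\frac\lambda2\|x-y\|^2:f^{k,\mathrm{up}}_p(x;y)\le0,p>m_1\}$. $x^{k,0}=x^k$, $x^{k,i+1}$ = subproblem solution at $x^{k,i}$; $i_k$ = first $i$ with $f_p^{k,\mathrm{up}}(x^{k,i+1};x^{k,i})\le f_p^k(x^{k,i+1})+\sigma^k_p+\epsilon_k$ $\forall p$, $f_p^{k,\mathrm{lo}}(x^{k,i+1};x^{k,i})\ge f^k_p(x^{k,i+1})-\epsilon_k$ for $p\in I_2$, $\|x^{k,i+1}-x^{k,i}\|\le\delta_k/(\lambda+\ell_k)$; $x^{k+1}=x^{k,i_k}$. Assumption 6: for all $k$ and every $(x',x'')$ with $x''$ the subproblem solution at $y=x'$, if $y_p\in\mathcal N_{(-\infty,0]}(f^{k,\mathrm{up}}_p(x'';x'))$ ($p>m_1$) and $0\in\sum_{p>m_1}y_p\partial f^{k,\mathrm{up}}_p(x'';x')$,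 then all $y_p=0$. $Y^k(x^{k+1})$: the set of $(y_{1,1},y_{1,2},\dots,y_{m,1},y_{m,2})$ with $0\in\sum_p[y_{p,1}\partial f^{k,\mathrm{up}}_p(x^{k,i_k+1};x^{k,i_k})+y_{p,2}\partial f^{k,\mathrm{lo}}_p(x^{k,i_k+1};x^{k,i_k})]+\lambda(x^{k,i_k+1}-x^{k,i_k})$, $y_{p,1}\in\partial\varphi^\uparrow_p(f^{k,\mathrm{up}}_p(x^{k,i_k+1};x^{k,i_k}))$, $y_{p,2}\in\partial\varphi^\downarrow_p(f^{k,\mathrm{lo}}_p(x^{k,i_k+1};x^{k,i_k}))$. For convex $\psi$, $\partial^\beta\psi(x)=\bigcup\{\partial\psi(z):\|z-x\|\le\beta\}$. $x$ is $(\bar\eta,\bar\beta,\bar k)$-weakly A-stationary if $\exists k\ge\bar k$ with $\operatorname{dist}\big(0,\sum_p\bigcup\{y_{p,1}[\partial^{\bar\beta}g^k_p(x)-\partial^{\bar\beta}h^k_p(x)]+y_{p,2}[\partial^{\bar\beta}g^k_p(x)-\partial^{\bar\beta}h^k_p(x)]:y_{p,1}\in\partial^{\bar\beta}\varphi_p^\uparrow(f^k_p(x)),y_{p,2}\in\partial^{\bar\beta}\varphi_p^\downarrow(f^k_p(x))\}\big)\le\bar\eta$. *)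

theory Defs
  imports "HOL-Analysis.Analysis"
begin

definition ind_nonpos :: "real \<Rightarrow> ereal" where
  "ind_nonpos z = (if z \<le> 0 then 0 else \<infinity>)"

text \<open>The outer functions of (CP1): phi_p for p \<le> m1 (real-valued, convex), indicator for p > m1.\<close>
definition Phi :: "nat \<Rightarrow> (nat \<Rightarrow> real \<Rightarrow> real) \<Rightarrow> nat \<Rightarrow> real \<Rightarrow> ereal" where
  "Phi m1 \<phi> p = (if p \<le> m1 then (\<lambda>z. ereal (\<phi> p z)) else ind_nonpos)"

definition nondecr :: "(real \<Rightarrow> ereal) \<Rightarrow> bool" where
  "nondecr \<psi> \<longleftrightarrow> (\<forall>s t. s \<le> t \<longrightarrow> \<psi> s \<le> \<psi> t)"

definition nonincr :: "(real \<Rightarrow> ereal) \<Rightarrow> bool" where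
  "nonincr \<psi> \<longleftrightarrow> (\<forall>s t. s \<le> t \<longrightarrow> \<psi> t \<le> \<psi> s)"

definition minimizer :: "(real \<Rightarrow> ereal) \<Rightarrow> real" where
  "minimizer \<psi> = (SOME z. \<forall>w. \<psi> z \<le> \<psi> w)"

text \<open>Monotonic decomposition phi = phi_up + phi_down.\<close>
definition phi_up :: "(real \<Rightarrow> ereal) \<Rightarrow> real \<Rightarrow> ereal" where
  "phi_up \<psi> = (if nondecr \<psi> then \<psi> else if nonincr \<psi> then (\<lambda>_. 0)
     else (\<lambda>z. if z \<le> minimizer \<psi> then \<psi> (minimizer \<psi>) else \<psi> z))"

definition phi_down :: "(real \<Rightarrow> ereal) \<Rightarrow> real \<Rightarrow> ereal" where
  "phi_down \<psi> = (if nondecr \<psi> then (\<lambda>_. 0) else if nonincr \<psi> then \<psi>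
     else (\<lambda>z. if z \<le> minimizer \<psi> then \<psi> z - \<psi> (minimizer \<psi>) else 0))"

definition esubdiff :: "(real \<Rightarrow> ereal) \<Rightarrow> real \<Rightarrow> real set" where
  "esubdiff \<psi> t = {y. \<psi> t \<noteq> \<infinity> \<and> (\<forall>s. \<psi> t + ereal (y * (s - t)) \<le> \<psi> s)}"

definition esubdiff_beta :: "(real \<Rightarrow> ereal) \<Rightarrow> real \<Rightarrow> real \<Rightarrow> real set" where
  "esubdiff_beta \<psi> \<beta> t = (\<Union>z\<in>{z. \<bar>z - t\<bar> \<le> \<beta>}. esubdiff \<psi> z)"

definition csubdiff :: "('a::real_inner \<Rightarrow> real) \<Rightarrow> 'a \<Rightarrow> 'a set" where
  "csubdiff f x = {v. \<forall>z. f x + inner v (z - x) \<le> f z}"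

definition csubdiff_beta :: "('a::real_inner \<Rightarrow> real) \<Rightarrow> real \<Rightarrow> 'a \<Rightarrow> 'a set" where
  "csubdiff_beta f \<beta> x = (\<Union>z\<in>{z. norm (z - x) \<le> \<beta>}. csubdiff f z)"

definition normal_cone :: "real set \<Rightarrow> real \<Rightarrow> real set" where
  "normal_cone C t = (if t \<in> C then {y. \<forall>s\<in>C. y * (s - t) \<le> 0} else {})"

definition haus :: "'a::metric_space set \<Rightarrow> 'a set \<Rightarrow> ereal" where
  "haus A B = max (SUP a\<in>A. ereal (infdist a B)) (SUP b\<in>B. ereal (infdist b A))"

definition msum :: "nat set \<Rightarrow> (nat \<Rightarrow> 'a::comm_monoid_add set) \<Rightarrow> 'a set" where
  "msum P S = {sum v P | v. \<forall>p\<in>P. v p \<in> S p}"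

definition mdiff :: "'a::ab_group_add set \<Rightarrow> 'a set \<Rightarrow> 'a set" where
  "mdiff A B = {a - b | a b. a \<in> A \<and> b \<in> B}"

definition mscale :: "real \<Rightarrow> 'a::real_vector set \<Rightarrow> 'a set" where
  "mscale c A = (\<lambda>v. c *\<^sub>R v) ` A"

definition dist0 :: "'a::real_normed_vector set \<Rightarrow> ereal" where
  "dist0 S = (if S = {} then \<infinity> else ereal (infdist 0 S))"

definition epi_conv :: "(nat \<Rightarrow> 'a::metric_space \<Rightarrow> ereal) \<Rightarrow> ('a \<Rightarrow> ereal) \<Rightarrow> bool" where
  "epi_conv F F0 \<longleftrightarrow> (\<forall>x.
      (\<forall>xs. xs \<longlonglongrightarrow> x \<longrightarrow> F0 x \<le> liminf (\<lambda>k. F k (xs k))) \<and>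
      (\<exists>xs. xs \<longlonglongrightarrow> x \<and> limsup (\<lambda>k. F k (xs k)) \<le> F0 x))"

definition level_bounded :: "('a::metric_space \<Rightarrow> ereal) \<Rightarrow> bool" where
  "level_bounded F \<longleftrightarrow> (\<forall>\<alpha>::real. bounded {x. F x \<le> ereal \<alpha>})"

definition outer_limit :: "(nat \<Rightarrow> 'a::real_normed_vector set) \<Rightarrow> 'a set" where
  "outer_limit C = {u. \<exists>r uk. strict_mono r \<and> (\<forall>j. uk j \<in> C (r j)) \<and> uk \<longlonglongrightarrow> u}"

definition horizon_outer_limit :: "(nat \<Rightarrow> 'a::real_normed_vector set) \<Rightarrow> 'a set" where
  "horizon_outer_limit C = {0} \<union> {u. \<exists>r lam uk. strict_mono r \<and> (\<forall>j. lam j > 0) \<and> decseq lam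
      \<and> lam \<longlonglongrightarrow> 0 \<and> (\<forall>j. uk j \<in> C (r j)) \<and> (\<lambda>j. lam j *\<^sub>R uk j) \<longlonglongrightarrow> u}"

section \<open>The problem data (CP1)\<close>

text \<open>g, h :: k p x;  the DC approximation f^k_p = g^k_p - h^k_p.\<close>
definition fk :: "(nat \<Rightarrow> nat \<Rightarrow> 'a \<Rightarrow> real) \<Rightarrow> (nat \<Rightarrow> nat \<Rightarrow> 'a \<Rightarrow> real) \<Rightarrow> nat \<Rightarrow> nat \<Rightarrow> 'a \<Rightarrow> real" where
  "fk g h k p x = g k p x - h k p x"

definition domF :: "(nat \<Rightarrow> real \<Rightarrow> ereal) \<Rightarrow> (nat \<Rightarrow> 'a \<Rightarrow> real) \<Rightarrow> nat \<Rightarrow> 'a set" where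
  "domF Ph f p = {x. Ph p (f p x) < \<infinity>}"

definition I1 :: "nat \<Rightarrow> (nat \<Rightarrow> real \<Rightarrow> ereal) \<Rightarrow> nat set" where
  "I1 m Ph = {p\<in>{1..m}. nondecr (Ph p)}"

definition I2 :: "nat \<Rightarrow> (nat \<Rightarrow> real \<Rightarrow> ereal) \<Rightarrow> nat set" where
  "I2 m Ph = {1..m} - I1 m Ph"

definition Tset :: "(nat \<Rightarrow> nat \<Rightarrow> 'a::real_normed_vector \<Rightarrow> real) \<Rightarrow> (nat \<Rightarrow> nat \<Rightarrow> 'a \<Rightarrow> real) \<Rightarrow> nat \<Rightarrow> 'a \<Rightarrow> real set" where
  "Tset g h p x = {t. \<exists>r xs. strict_mono r \<and> xs \<longlonglongrightarrow> x \<and> (\<lambda>j. fk g h (r j) p (xs (r j))) \<longlonglongrightarrow> t}"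

definition subdiff_A :: "(nat \<Rightarrow> nat \<Rightarrow> 'a::real_inner \<Rightarrow> real) \<Rightarrow> (nat \<Rightarrow> nat \<Rightarrow> 'a \<Rightarrow> real) \<Rightarrow> nat \<Rightarrow> 'a \<Rightarrow> 'a set" where
  "subdiff_A g h p x = (\<Union>xs\<in>{xs. xs \<longlonglongrightarrow> x}.
     outer_limit (\<lambda>k. mdiff (csubdiff (g k p) (xs k)) (csubdiff (h k p) (xs k))))"

definition hsubdiff_A :: "(nat \<Rightarrow> nat \<Rightarrow> 'a::real_inner \<Rightarrow> real) \<Rightarrow> (nat \<Rightarrow> nat \<Rightarrow> 'a \<Rightarrow> real) \<Rightarrow> nat \<Rightarrow> 'a \<Rightarrow> 'a set" where
  "hsubdiff_A g h p x = (\<Union>xs\<in>{xs. xs \<longlonglongrightarrow> x}.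
     horizon_outer_limit (\<lambda>k. mdiff (csubdiff (g k p) (xs k)) (csubdiff (h k p) (xs k))))"

definition assumption1 :: "nat \<Rightarrow> (nat \<Rightarrow> real \<Rightarrow> ereal) \<Rightarrow> (nat \<Rightarrow> 'a::euclidean_space \<Rightarrow> real)
    \<Rightarrow> (nat \<Rightarrow> nat \<Rightarrow> 'a \<Rightarrow> real) \<Rightarrow> (nat \<Rightarrow> nat \<Rightarrow> 'a \<Rightarrow> real) \<Rightarrow> bool" where
  "assumption1 m Ph f g h \<longleftrightarrow> (\<forall>p\<in>{1..m}.
      (\<forall>k. convex_on UNIV (g k p) \<and> convex_on UNIV (h k p)) \<and>
      epi_conv (\<lambda>k x. ereal (fk g h k p x)) (\<lambda>x. ereal (f p x)) \<and>
      (\<forall>x. - \<infinity> < Liminf (nhds x \<times>\<^sub>F sequentially) (\<lambda>(x', k). ereal (fk g h k p x'))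
         \<and> Liminf (nhds x \<times>\<^sub>F sequentially) (\<lambda>(x', k). ereal (fk g h k p x'))
             \<le> Limsup (nhds x \<times>\<^sub>F sequentially) (\<lambda>(x', k). ereal (fk g h k p x'))
         \<and> Limsup (nhds x \<times>\<^sub>F sequentially) (\<lambda>(x', k). ereal (fk g h k p x')) < \<infinity>) \<and>
      epi_conv (\<lambda>k x. Ph p (fk g h k p x)) (\<lambda>x. Ph p (f p x)))"

definition Xk :: "nat \<Rightarrow> nat \<Rightarrow> (nat \<Rightarrow> nat \<Rightarrow> 'a \<Rightarrow> real) \<Rightarrow> (nat \<Rightarrow> nat \<Rightarrow> 'a \<Rightarrow> real) \<Rightarrow> nat \<Rightarrow> 'a set" where
  "Xk m1 m g h k = {x. \<forall>p\<in>{m1<..m}. fk g h k p x \<le> 0}"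

text \<open>alpha_hat p k; x0 is the initial point of the method.\<close>
definition assumption2 :: "nat \<Rightarrow> nat \<Rightarrow> (nat \<Rightarrow> nat \<Rightarrow> 'a \<Rightarrow> real) \<Rightarrow> (nat \<Rightarrow> nat \<Rightarrow> 'a \<Rightarrow> real)
    \<Rightarrow> (nat \<Rightarrow> nat \<Rightarrow> real) \<Rightarrow> 'a \<Rightarrow> bool" where
  "assumption2 m1 m g h \<alpha>h x0 \<longleftrightarrow>
     (\<forall>p\<in>{m1<..m}. (\<forall>k. 0 \<le> \<alpha>h p k \<and>
         (SUP x\<in>Xk m1 m g h k. ereal (max 0 (fk g h (Suc k) p x - fk g h k p x))) \<le> ereal (\<alpha>h p k))
       \<and> summable (\<alpha>h p) \<and> fk g h 0 p x0 \<le> - suminf (\<alpha>h p)) \<and>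
     (\<forall>p\<in>{1..m1}. \<forall>k. \<alpha>h p k = 0)"

definition assumption3 :: "nat \<Rightarrow> (nat \<Rightarrow> nat \<Rightarrow> 'a::real_inner \<Rightarrow> real) \<Rightarrow> (nat \<Rightarrow> nat \<Rightarrow> 'a \<Rightarrow> real)
    \<Rightarrow> (nat \<Rightarrow> real) \<Rightarrow> bool" where
  "assumption3 m g h ell \<longleftrightarrow> (\<forall>k. ell k > 0 \<and> (\<forall>x x'. \<forall>p\<in>{1..m}.
      min (haus (csubdiff (g k p) x) (csubdiff (g k p) x'))
          (haus (csubdiff (h k p) x) (csubdiff (h k p) x')) \<le> ereal (ell k * norm (x - x'))))"

definition assumption4 :: "nat \<Rightarrow> (nat \<Rightarrow> real \<Rightarrow> ereal) \<Rightarrow> (nat \<Rightarrow> nat \<Rightarrow> 'a::euclidean_space \<Rightarrow> real)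
    \<Rightarrow> (nat \<Rightarrow> nat \<Rightarrow> 'a \<Rightarrow> real) \<Rightarrow> bool" where
  "assumption4 m Ph g h \<longleftrightarrow> (\<forall>k. level_bounded (\<lambda>x. \<Sum>p\<in>{1..m}. Ph p (fk g h k p x)))"

definition assumption5 :: "nat \<Rightarrow> (nat \<Rightarrow> real \<Rightarrow> ereal) \<Rightarrow> (nat \<Rightarrow> 'a::euclidean_space \<Rightarrow> real)
    \<Rightarrow> (nat \<Rightarrow> nat \<Rightarrow> 'a \<Rightarrow> real) \<Rightarrow> (nat \<Rightarrow> nat \<Rightarrow> 'a \<Rightarrow> real) \<Rightarrow> bool" where
  "assumption5 m Ph f g h \<longleftrightarrow> (\<forall>xb \<in> (\<Inter>p\<in>{1..m}. domF Ph f p).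
     \<forall>(y::nat \<Rightarrow> real) (v::nat \<Rightarrow> 'a).
       (\<forall>p\<in>{1..m}. (y p, v p) \<in>
          ((\<Union>t\<in>Tset g h p xb. normal_cone {z. Ph p z < \<infinity>} t) \<times> (convex hull (subdiff_A g h p xb)))
          \<union> (UNIV \<times> (hsubdiff_A g h p xb - {0})))
       \<and> (\<Sum>p\<in>{1..m}. y p *\<^sub>R v p) = 0
       \<longrightarrow> (\<forall>p\<in>{1..m}. y p = 0))"

section \<open>The prox-ADC method\<close>

definition sigma :: "(nat \<Rightarrow> nat \<Rightarrow> real) \<Rightarrow> nat \<Rightarrow> nat \<Rightarrow> real" where
  "sigma \<alpha>h k p = (\<Sum>j. \<alpha>h p (j + k))"

text \<open>a k p y \<in> \<partial>h^k_p(y), b k p y \<in> \<partial>g^k_p(y) are the subgradients picked at y.\<close>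
definition f_up :: "(nat \<Rightarrow> nat \<Rightarrow> 'a::real_inner \<Rightarrow> real) \<Rightarrow> (nat \<Rightarrow> nat \<Rightarrow> 'a \<Rightarrow> real) \<Rightarrow> (nat \<Rightarrow> nat \<Rightarrow> 'a \<Rightarrow> 'a)
    \<Rightarrow> (nat \<Rightarrow> nat \<Rightarrow> real) \<Rightarrow> nat \<Rightarrow> nat \<Rightarrow> 'a \<Rightarrow> 'a \<Rightarrow> real" where
  "f_up g h a \<alpha>h k p x y = g k p x - h k p y - inner (a k p y) (x - y) + sigma \<alpha>h k p"

definition f_lo :: "(nat \<Rightarrow> nat \<Rightarrow> 'a::real_inner \<Rightarrow> real) \<Rightarrow> (nat \<Rightarrow> nat \<Rightarrow> 'a \<Rightarrow> real) \<Rightarrow> (nat \<Rightarrow> nat \<Rightarrow> 'a \<Rightarrow> 'a)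
    \<Rightarrow> nat \<Rightarrow> nat \<Rightarrow> 'a \<Rightarrow> 'a \<Rightarrow> real" where
  "f_lo g h b k p x y = g k p y + inner (b k p y) (x - y) - h k p x"

text \<open>Subdifferentials (in x) of f_up(.;y) (convex) and f_lo(.;y) (concave).\<close>
definition df_up :: "(nat \<Rightarrow> nat \<Rightarrow> 'a::real_inner \<Rightarrow> real) \<Rightarrow> (nat \<Rightarrow> nat \<Rightarrow> 'a \<Rightarrow> 'a) \<Rightarrow> nat \<Rightarrow> nat \<Rightarrow> 'a \<Rightarrow> 'a \<Rightarrow> 'a set" where
  "df_up g a k p x y = (\<lambda>u. u - a k p y) ` csubdiff (g k p) x"

definition df_lo :: "(nat \<Rightarrow> nat \<Rightarrow> 'a::real_inner \<Rightarrow> real) \<Rightarrow> (nat \<Rightarrow> nat \<Rightarrow> 'a \<Rightarrow> 'a) \<Rightarrow> nat \<Rightarrow> nat \<Rightarrow> 'a \<Rightarrow> 'a \<Rightarrow> 'a set" where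
  "df_lo h b k p x y = (\<lambda>w. b k p y - w) ` csubdiff (h k p) x"

definition Fhat :: "(nat \<Rightarrow> real \<Rightarrow> ereal) \<Rightarrow> (nat \<Rightarrow> nat \<Rightarrow> 'a::real_inner \<Rightarrow> real) \<Rightarrow> (nat \<Rightarrow> nat \<Rightarrow> 'a \<Rightarrow> real)
    \<Rightarrow> (nat \<Rightarrow> nat \<Rightarrow> 'a \<Rightarrow> 'a) \<Rightarrow> (nat \<Rightarrow> nat \<Rightarrow> 'a \<Rightarrow> 'a) \<Rightarrow> (nat \<Rightarrow> nat \<Rightarrow> real) \<Rightarrow> nat \<Rightarrow> nat \<Rightarrow> 'a \<Rightarrow> 'a \<Rightarrow> ereal" where
  "Fhat Ph g h a b \<alpha>h k p x y =
     phi_up (Ph p) (f_up g h a \<alpha>h k p x y) + phi_down (Ph p) (f_lo g h b k p x y)"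

definition is_subsol :: "nat \<Rightarrow> nat \<Rightarrow> (nat \<Rightarrow> real \<Rightarrow> ereal) \<Rightarrow> (nat \<Rightarrow> nat \<Rightarrow> 'a::real_inner \<Rightarrow> real) \<Rightarrow> (nat \<Rightarrow> nat \<Rightarrow> 'a \<Rightarrow> real)
    \<Rightarrow> (nat \<Rightarrow> nat \<Rightarrow> 'a \<Rightarrow> 'a) \<Rightarrow> (nat \<Rightarrow> nat \<Rightarrow> 'a \<Rightarrow> 'a) \<Rightarrow> (nat \<Rightarrow> nat \<Rightarrow> real) \<Rightarrow> real \<Rightarrow> nat \<Rightarrow> 'a \<Rightarrow> 'a \<Rightarrow> bool" where
  "is_subsol m1 m Ph g h a b \<alpha>h lam k y x'' \<longleftrightarrow>
     (\<forall>p\<in>{m1<..m}. f_up g h a \<alpha>h k p x'' y \<le> 0) \<and>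
     (\<forall>x. (\<forall>p\<in>{m1<..m}. f_up g h a \<alpha>h k p x y \<le> 0) \<longrightarrow>
        (\<Sum>p\<in>{1..m1}. Fhat Ph g h a b \<alpha>h k p x'' y) + ereal (lam / 2 * (norm (x'' - y))\<^sup>2)
        \<le> (\<Sum>p\<in>{1..m1}. Fhat Ph g h a b \<alpha>h k p x y) + ereal (lam / 2 * (norm (x - y))\<^sup>2))"

text \<open>Stopping test of the inner loop at inner index i (compares x^{k,i+1} with x^{k,i}).\<close>
definition inner_stop :: "nat \<Rightarrow> (nat \<Rightarrow> real \<Rightarrow> ereal) \<Rightarrow> (nat \<Rightarrow> nat \<Rightarrow> 'a::real_inner \<Rightarrow> real) \<Rightarrow> (nat \<Rightarrow> nat \<Rightarrow> 'a \<Rightarrow> real)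
    \<Rightarrow> (nat \<Rightarrow> nat \<Rightarrow> 'a \<Rightarrow> 'a) \<Rightarrow> (nat \<Rightarrow> nat \<Rightarrow> 'a \<Rightarrow> 'a) \<Rightarrow> (nat \<Rightarrow> nat \<Rightarrow> real) \<Rightarrow> real
    \<Rightarrow> (nat \<Rightarrow> real) \<Rightarrow> (nat \<Rightarrow> real) \<Rightarrow> (nat \<Rightarrow> real) \<Rightarrow> (nat \<Rightarrow> nat \<Rightarrow> 'a) \<Rightarrow> nat \<Rightarrow> nat \<Rightarrow> bool" where
  "inner_stop m Ph g h a b \<alpha>h lam \<epsilon> \<delta> ell xi k i \<longleftrightarrow>
     (\<forall>p\<in>{1..m}. f_up g h a \<alpha>h k p (xi k (Suc i)) (xi k i)
                   \<le> fk g h k p (xi k (Suc i)) + sigma \<alpha>h k p + \<epsilon> k) \<and>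
     (\<forall>p\<in>I2 m Ph. f_lo g h b k p (xi k (Suc i)) (xi k i) \<ge> fk g h k p (xi k (Suc i)) - \<epsilon> k) \<and>
     norm (xi k (Suc i) - xi k i) \<le> \<delta> k / (lam + ell k)"

text \<open>The prox-ADC method generating outer iterates xs k = x^k, inner iterates xi k i = x^{k,i},
  and stopping indices ik k = i_k.\<close>
definition prox_ADC :: "nat \<Rightarrow> nat \<Rightarrow> (nat \<Rightarrow> real \<Rightarrow> ereal) \<Rightarrow> (nat \<Rightarrow> nat \<Rightarrow> 'a::real_inner \<Rightarrow> real) \<Rightarrow> (nat \<Rightarrow> nat \<Rightarrow> 'a \<Rightarrow> real)
    \<Rightarrow> (nat \<Rightarrow> nat \<Rightarrow> 'a \<Rightarrow> 'a) \<Rightarrow> (nat \<Rightarrow> nat \<Rightarrow> 'a \<Rightarrow> 'a) \<Rightarrow> (nat \<Rightarrow> nat \<Rightarrow> real) \<Rightarrow> real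
    \<Rightarrow> (nat \<Rightarrow> real) \<Rightarrow> (nat \<Rightarrow> real) \<Rightarrow> (nat \<Rightarrow> real) \<Rightarrow> (nat \<Rightarrow> 'a) \<Rightarrow> (nat \<Rightarrow> nat \<Rightarrow> 'a) \<Rightarrow> (nat \<Rightarrow> nat) \<Rightarrow> bool" where
  "prox_ADC m1 m Ph g h a b \<alpha>h lam \<epsilon> \<delta> ell xs xi ik \<longleftrightarrow>
     lam > 0 \<and>
     (\<forall>k. \<epsilon> k > 0) \<and> decseq \<epsilon> \<and> \<epsilon> \<longlonglongrightarrow> 0 \<and>
     (\<forall>k. \<delta> k > 0) \<and> decseq \<delta> \<and> \<delta> \<longlonglongrightarrow> 0 \<and>
     decseq (\<lambda>k. \<delta> k / (lam + ell k)) \<and> (\<lambda>k. \<delta> k / (lam + ell k)) \<longlonglongrightarrow> 0 \<and>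
     (\<forall>k. \<forall>p\<in>{1..m}. \<forall>y. a k p y \<in> csubdiff (h k p) y \<and> b k p y \<in> csubdiff (g k p) y) \<and>
     (\<forall>k. xi k 0 = xs k \<and>
          (\<forall>i \<le> ik k. is_subsol m1 m Ph g h a b \<alpha>h lam k (xi k i) (xi k (Suc i))) \<and>
          inner_stop m Ph g h a b \<alpha>h lam \<epsilon> \<delta> ell xi k (ik k) \<and>
          (\<forall>i < ik k. \<not> inner_stop m Ph g h a b \<alpha>h lam \<epsilon> \<delta> ell xi k i) \<and>
          xs (Suc k) = xi k (ik k))"

definition assumption6 :: "nat \<Rightarrow> nat \<Rightarrow> (nat \<Rightarrow> real \<Rightarrow> ereal) \<Rightarrow> (nat \<Rightarrow> nat \<Rightarrow> 'a::real_inner \<Rightarrow> real) \<Rightarrow> (nat \<Rightarrow> nat \<Rightarrow> 'a \<Rightarrow> real)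
    \<Rightarrow> (nat \<Rightarrow> nat \<Rightarrow> 'a \<Rightarrow> 'a) \<Rightarrow> (nat \<Rightarrow> nat \<Rightarrow> 'a \<Rightarrow> 'a) \<Rightarrow> (nat \<Rightarrow> nat \<Rightarrow> real) \<Rightarrow> real \<Rightarrow> bool" where
  "assumption6 m1 m Ph g h a b \<alpha>h lam \<longleftrightarrow> (\<forall>k x' x''. is_subsol m1 m Ph g h a b \<alpha>h lam k x' x'' \<longrightarrow>
     (\<forall>y::nat \<Rightarrow> real.
        (\<forall>p\<in>{m1<..m}. y p \<in> normal_cone {..0} (f_up g h a \<alpha>h k p x'' x')) \<and>
        0 \<in> msum {m1<..m} (\<lambda>p. mscale (y p) (df_up g a k p x'' x'))
        \<longrightarrow> (\<forall>p\<in>{m1<..m}. y p = 0)))"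

text \<open>The multiplier set Y^k(x^{k+1}); a multiplier is y p = (y_{p,1}, y_{p,2}).\<close>
definition Yset :: "nat \<Rightarrow> (nat \<Rightarrow> real \<Rightarrow> ereal) \<Rightarrow> (nat \<Rightarrow> nat \<Rightarrow> 'a::real_inner \<Rightarrow> real) \<Rightarrow> (nat \<Rightarrow> nat \<Rightarrow> 'a \<Rightarrow> real)
    \<Rightarrow> (nat \<Rightarrow> nat \<Rightarrow> 'a \<Rightarrow> 'a) \<Rightarrow> (nat \<Rightarrow> nat \<Rightarrow> 'a \<Rightarrow> 'a) \<Rightarrow> (nat \<Rightarrow> nat \<Rightarrow> real) \<Rightarrow> real
    \<Rightarrow> (nat \<Rightarrow> nat \<Rightarrow> 'a) \<Rightarrow> (nat \<Rightarrow> nat) \<Rightarrow> nat \<Rightarrow> (nat \<Rightarrow> real \<times> real) set" where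
  "Yset m Ph g h a b \<alpha>h lam xi ik k =
     (let x1 = xi k (Suc (ik k)); x0 = xi k (ik k) in
      {y. (\<forall>p\<in>{1..m}. fst (y p) \<in> esubdiff (phi_up (Ph p)) (f_up g h a \<alpha>h k p x1 x0)
                     \<and> snd (y p) \<in> esubdiff (phi_down (Ph p)) (f_lo g h b k p x1 x0)) \<and>
          0 \<in> (\<lambda>z. z + lam *\<^sub>R (x1 - x0)) `
                msum {1..m} (\<lambda>p. {fst (y p) *\<^sub>R u + snd (y p) *\<^sub>R w | u w.
                                    u \<in> df_up g a k p x1 x0 \<and> w \<in> df_lo h b k p x1 x0})})"

definition ynorm :: "nat \<Rightarrow> (nat \<Rightarrow> real \<times> real) \<Rightarrow> real" where
  "ynorm m y = sqrt (\<Sum>p\<in>{1..m}. (fst (y p))\<^sup>2 + (snd (y p))\<^sup>2)"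

definition weakly_A_stationary :: "nat \<Rightarrow> (nat \<Rightarrow> real \<Rightarrow> ereal) \<Rightarrow> (nat \<Rightarrow> nat \<Rightarrow> 'a::euclidean_space \<Rightarrow> real)
    \<Rightarrow> (nat \<Rightarrow> nat \<Rightarrow> 'a \<Rightarrow> real) \<Rightarrow> ereal \<Rightarrow> real \<Rightarrow> nat \<Rightarrow> 'a \<Rightarrow> bool" where
  "weakly_A_stationary m Ph g h \<eta> \<beta> kb x \<longleftrightarrow> (\<exists>k\<ge>kb.
     dist0 (msum {1..m} (\<lambda>p.
       let A = mdiff (csubdiff_beta (g k p) \<beta> x) (csubdiff_beta (h k p) \<beta> x) in
       \<Union>{ {y1 *\<^sub>R u1 + y2 *\<^sub>R u2 | u1 u2. u1 \<in> A \<and> u2 \<in> A} | y1 y2.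
            y1 \<in> esubdiff_beta (phi_up (Ph p)) \<beta> (fk g h k p x) \<and>
            y2 \<in> esubdiff_beta (phi_down (Ph p)) \<beta> (fk g h k p x)})) \<le> \<eta>)"

end

theory Submission
  imports Defs
begin

lemma csubdiff_real: "csubdiff \<theta> t = {\<mu>. \<forall>s. \<theta> t + \<mu> * (s - t) \<le> \<theta> (s::real)}"
  by (simp add: csubdiff_def)

lemma csubdiff_const: "csubdiff (\<lambda>_. c) x = {0}"
proof -
  have "v = 0" if "\<forall>z. inner v (z - x) \<le> 0" for v :: 'a
    using that[rule_format, of "x + v"] by (metis add_diff_cancel_left' inner_gt_zero_iff not_le)
  then show ?thesis by (auto simp: csubdiff_def)
qed

lemma csubdiff_add_linear: "csubdiff (\<lambda>z. q z + inner u z + c) x = (\<lambda>v. v + u) ` csubdiff q x"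
proof -
  have "v \<in> csubdiff (\<lambda>z. q z + inner u z + c) x \<longleftrightarrow> v - u \<in> csubdiff q x" for v
    by (simp add: csubdiff_def algebra_simps)
  then show ?thesis by (force simp: image_iff)
qed

lemma concave_on_affine: "concave_on UNIV (\<lambda>z. inner w z + c)"
proof -
  have "u * c + v * c = c" if "u + v = 1" for u v :: real
    by (metis that distrib_right mult_1)
  then show ?thesis by (simp add: concave_on_iff inner_add_right algebra_simps)
qed

lemma nonneg_of_lower_bound:
  fixes a b c :: real
  assumes "\<And>r. 0 \<le> r \<Longrightarrow> b \<le> a + c * r"
  shows "0 \<le> c"
proof (rule ccontr)
  assume "\<not> 0 \<le> c"
  moreover have "b \<le> a" using assms[of 0] by simp
  ultimately have "0 \<le> (a - b) / - c + 1" and "a + c * ((a - b) / - c + 1) < b"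
    by (simp_all add: field_simps mult_neg_neg)
  then show False using assms by fastforce
qed

lemma affine_le_of_less:
  fixes a b c y :: real
  assumes "0 \<le> c" and "\<And>t. t < y \<Longrightarrow> a + c * t \<le> b"
  shows "a + c * y \<le> b"
proof (cases "c = 0")
  case True
  then show ?thesis using assms(2)[of "y - 1"] by simp
next
  case False
  with assms(1) have c: "0 < c" by simp
  have "t \<le> (b - a) / c" if "t < y" for t
    using assms(2)[OF that] c by (simp add: pos_le_divide_eq mult.commute)
  then have "y \<le> (b - a) / c" by (rule dense_le)
  then show ?thesis using c by (simp add: pos_le_divide_eq mult.commute)
qed

lemma convex_strict_hypograph:
  assumes "concave_on D G"
  shows "convex {p. fst p \<in> D \<and> snd p < G (fst p)}"
proof (rule convexI)
  fix p q :: "'a \<times> real" and u v :: real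
  assume p: "p \<in> {p. fst p \<in> D \<and> snd p < G (fst p)}" and q: "q \<in> {p. fst p \<in> D \<and> snd p < G (fst p)}"
    and uv: "0 \<le> u" "0 \<le> v" "u + v = 1"
  have "u * snd p + v * snd q < u * G (fst p) + v * G (fst q)"
  proof (cases "u = 0")
    case True
    then show ?thesis using q uv by simp
  next
    case False
    then have "u * snd p < u * G (fst p)" using p uv by simp
    moreover have "v * snd q \<le> v * G (fst q)" using q uv by (simp add: mult_left_mono)
    ultimately show ?thesis by linarith
  qed
  also have "\<dots> \<le> G (u *\<^sub>R fst p + v *\<^sub>R fst q)"
    using assms p q uv by (simp add: concave_on_iff)
  finally show "u *\<^sub>R p + v *\<^sub>R q \<in> {p. fst p \<in> D \<and> snd p < G (fst p)}"
    using p q uv concave_on_imp_convex[OF assms] by (simp add: convex_def)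
qed

lemma supporting_affine_between:
  fixes f G :: "'a::euclidean_space \<Rightarrow> real"
  assumes f: "convex_on UNIV f" and G: "concave_on D G" and x: "x \<in> D"
    and below: "\<And>z. z \<in> D \<Longrightarrow> G z \<le> f z" and touch: "G x = f x"
  shows "\<exists>u. u \<in> csubdiff f x \<and> (\<forall>z\<in>D. G z \<le> G x + inner u (z - x))"
proof -
  define S where "S = {p. fst p \<in> D \<and> snd p < G (fst p)}"
  have "(x, G x - 1) \<in> S" "(x, f x) \<in> epigraph UNIV f"
    using x by (auto simp: S_def mem_epigraph)
  moreover have "S \<inter> epigraph UNIV f = {}"
    using below by (fastforce simp: S_def epigraph_def)
  ultimately obtain a b where "a \<noteq> 0" and aS: "\<forall>p\<in>S. inner a p \<le> b"
    and aE: "\<forall>p\<in>epigraph UNIV f. b \<le> inner a p"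
    using separating_hyperplane_sets[OF convex_strict_hypograph[OF G] convex_epigraphI[OF f]]
    unfolding S_def by blast
  obtain w c where a: "a = (w, c)" by (cases a)
  have below_b: "inner w z + c * t \<le> b" if "z \<in> D" "t < G z" for z t
    using aS[rule_format, of "(z, t)"] that by (simp add: S_def a)
  have above_b: "b \<le> inner w z + c * t" if "f z \<le> t" for z t
    using aE[rule_format, of "(z, t)"] that by (simp add: mem_epigraph a)
  have "0 \<le> c"
  proof (rule nonneg_of_lower_bound)
    fix r :: real assume "0 \<le> r"
    show "b \<le> (inner w x + c * f x) + c * r"
      using above_b[of x "f x + r"] \<open>0 \<le> r\<close> by (simp add: algebra_simps)
  qed
  moreover have "c \<noteq> 0"
  proof
    assume "c = 0"
    then have "w \<noteq> 0" using \<open>a \<noteq> 0\<close> a by (auto simp: zero_prod_def)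
    have "inner w x \<le> b" using below_b[OF x, of "G x - 1"] \<open>c = 0\<close> by simp
    also have "b \<le> inner w (x - w)" using above_b[of "x - w" "f (x - w)"] \<open>c = 0\<close> by simp
    finally have "inner w w \<le> 0" by (simp add: inner_diff_right)
    then show False using \<open>w \<noteq> 0\<close> by (metis inner_gt_zero_iff not_le)
  qed
  ultimately have c: "0 < c" by simp
  have hypo: "inner w z + c * G z \<le> b" if "z \<in> D" for z
    by (rule affine_le_of_less) (use c below_b[OF that] in auto)
  have epi: "b \<le> inner w z + c * f z" for z
    using above_b[of z "f z"] by simp
  have b: "b = inner w x + c * f x"
    using hypo[OF x] epi[of x] touch by simp
  define u where "u = - (1 / c) *\<^sub>R w"
  have u_inner: "inner u (z - x) = (inner w x - inner w z) / c" for z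
    by (simp add: u_def inner_diff_right diff_divide_distrib)
  have "u \<in> csubdiff f x"
  proof -
    have "f x + inner u (z - x) \<le> f z" for z
    proof -
      have "(inner w x - inner w z) / c \<le> f z - f x"
        using epi[of z] b c by (subst pos_divide_le_eq) (auto simp: algebra_simps)
      then show ?thesis unfolding u_inner by linarith
    qed
    then show ?thesis by (simp add: csubdiff_def)
  qed
  moreover have "G z \<le> G x + inner u (z - x)" if "z \<in> D" for z
  proof -
    have "G z - G x \<le> (inner w x - inner w z) / c"
      using hypo[OF that] b c touch by (subst pos_le_divide_eq) (auto simp: algebra_simps)
    then show ?thesis unfolding u_inner by linarith
  qed
  ultimately show ?thesis by (intro exI[of _ u] conjI ballI)
qed

lemma csubdiff_nonempty:
  fixes f :: "'a::euclidean_space \<Rightarrow> real"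
  assumes "convex_on UNIV f"
  shows "csubdiff f x \<noteq> {}"
proof -
  have "concave_on {x} f"
    by (simp add: concave_on_iff flip: scaleR_add_left distrib_right)
  then show ?thesis using supporting_affine_between[OF assms, of "{x}" f x] by auto
qed

lemma csubdiff_add_decompose:
  fixes f g :: "'a::euclidean_space \<Rightarrow> real"
  assumes f: "convex_on UNIV f" and g: "convex_on UNIV g"
    and w: "w \<in> csubdiff (\<lambda>z. f z + g z) x"
  shows "\<exists>u v. u \<in> csubdiff f x \<and> v \<in> csubdiff g x \<and> w = u + v"
proof -
  define G where "G z = inner w z + (f x + g x - inner w x) - g z" for z
  have "concave_on UNIV G"
    unfolding G_def by (intro concave_on_diff g concave_on_affine)
  moreover have "G z \<le> f z" for z
    using w[unfolded csubdiff_def, simplified, rule_format, of z] by (simp add: G_def inner_diff_right)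
  ultimately obtain u where u: "u \<in> csubdiff f x" and "\<forall>z. G z \<le> G x + inner u (z - x)"
    using supporting_affine_between[OF f, of UNIV G x] by (auto simp: G_def)
  then have "w - u \<in> csubdiff g x"
    by (simp add: csubdiff_def G_def algebra_simps)
  then show ?thesis using u by force
qed


lemma zero_in_csubdiff_iff: "0 \<in> csubdiff f x \<longleftrightarrow> (\<forall>z. f x \<le> f z)"
  by (simp add: csubdiff_def)

lemma convex_on_sum_fun:
  assumes "finite I" "convex S" "\<And>i. i \<in> I \<Longrightarrow> convex_on S (F i)"
  shows "convex_on S (\<lambda>z. \<Sum>i\<in>I. F i z)"
  using assms by (induction I rule: finite_induct) (auto simp: convex_on_const)

lemma csubdiff_sum_decompose:
  fixes F :: "'i \<Rightarrow> 'a::euclidean_space \<Rightarrow> real"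
  assumes "finite I" "\<And>i. i \<in> I \<Longrightarrow> convex_on UNIV (F i)"
    and "w \<in> csubdiff (\<lambda>z. \<Sum>i\<in>I. F i z) x"
  shows "\<exists>v. (\<forall>i\<in>I. v i \<in> csubdiff (F i) x) \<and> w = (\<Sum>i\<in>I. v i)"
  using assms
proof (induction I arbitrary: w rule: finite_induct)
  case empty
  then show ?case by (simp add: csubdiff_const)
next
  case (insert j I)
  have "convex_on UNIV (\<lambda>z. \<Sum>i\<in>I. F i z)"
    using insert by (intro convex_on_sum_fun) auto
  then obtain u u' where u: "u \<in> csubdiff (F j) x"
    and u': "u' \<in> csubdiff (\<lambda>z. \<Sum>i\<in>I. F i z) x" and w: "w = u + u'"
    using csubdiff_add_decompose[of "F j" "\<lambda>z. \<Sum>i\<in>I. F i z" w x] insert by auto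
  obtain v where v: "\<forall>i\<in>I. v i \<in> csubdiff (F i) x" and "u' = (\<Sum>i\<in>I. v i)"
    using insert.IH[OF _ u'] insert.prems by auto
  moreover have "(\<Sum>i\<in>I. (v(j := u)) i) = (\<Sum>i\<in>I. v i)"
    using insert.hyps by (intro sum.cong) auto
  ultimately show ?case
    using insert.hyps u v w by (intro exI[of _ "v(j := u)"]) auto
qed

lemma csubdiff_cmul_decompose:
  fixes F :: "'a::euclidean_space \<Rightarrow> real"
  assumes "0 \<le> c" "convex_on UNIV F" "w \<in> csubdiff (\<lambda>z. c * F z) x"
  shows "\<exists>v\<in>csubdiff F x. w = c *\<^sub>R v"
proof (cases "c = 0")
  case True
  then show ?thesis
    using assms(3) csubdiff_nonempty[OF assms(2)] by (auto simp: csubdiff_const)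
next
  case False
  with assms(1) have c: "0 < c" by simp
  have "F x + inner (w /\<^sub>R c) (z - x) \<le> F z" for z
  proof -
    have "c * F x + inner w (z - x) \<le> c * F z"
      using assms(3) by (simp add: csubdiff_def)
    then show ?thesis using c by (simp add: field_simps)
  qed
  then have "w /\<^sub>R c \<in> csubdiff F x" by (simp add: csubdiff_def)
  then show ?thesis using c by (intro bexI[of _ "w /\<^sub>R c"]) auto
qed

lemma csubdiff_weighted_sum_decompose:
  fixes F :: "'i \<Rightarrow> 'a::euclidean_space \<Rightarrow> real"
  assumes "finite I" "\<And>i. i \<in> I \<Longrightarrow> 0 \<le> c i \<and> convex_on UNIV (F i)"
    and "w \<in> csubdiff (\<lambda>z. \<Sum>i\<in>I. c i * F i z) x"
  shows "\<exists>v. (\<forall>i\<in>I. v i \<in> csubdiff (F i) x) \<and> w = (\<Sum>i\<in>I. c i *\<^sub>R v i)"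
proof -
  have "convex_on UNIV (\<lambda>z. c i * F i z)" if "i \<in> I" for i
    using assms(2)[OF that] by (auto intro: convex_on_cmul)
  then obtain v' where v': "\<forall>i\<in>I. v' i \<in> csubdiff (\<lambda>z. c i * F i z) x" and w: "w = (\<Sum>i\<in>I. v' i)"
    using csubdiff_sum_decompose[OF assms(1) _ assms(3)] by blast
  have "\<forall>i\<in>I. \<exists>v\<in>csubdiff (F i) x. v' i = c i *\<^sub>R v"
    using csubdiff_cmul_decompose assms(2) v' by blast
  then obtain v where "\<forall>i\<in>I. v i \<in> csubdiff (F i) x \<and> v' i = c i *\<^sub>R v i"
    by metis
  then show ?thesis using w by (intro exI[of _ v]) auto
qed

lemma convex_on_compose_mono_on:
  fixes \<theta> :: "real \<Rightarrow> real"
  assumes \<theta>: "convex_on T \<theta>" "mono_on T \<theta>" and H: "convex_on S H" and "H ` S \<subseteq> T"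
  shows "convex_on S (\<lambda>z. \<theta> (H z))"
  unfolding convex_on_def
proof (intro conjI ballI allI impI)
  show "convex S" using H by (rule convex_on_imp_convex)
  fix x y u v :: real
  fix x y assume xy: "x \<in> S" "y \<in> S"
  fix u v :: real assume uv: "0 \<le> u" "0 \<le> v" "u + v = 1"
  have HT: "H x \<in> T" "H y \<in> T" "H (u *\<^sub>R x + v *\<^sub>R y) \<in> T"
    using xy uv \<open>convex S\<close> \<open>H ` S \<subseteq> T\<close> by (auto simp: convex_def)
  have "u * H x + v * H y \<in> T"
    using HT uv convex_on_imp_convex[OF \<theta>(1)] by (simp add: convex_def)
  moreover have "H (u *\<^sub>R x + v *\<^sub>R y) \<le> u * H x + v * H y"
    using H xy uv by (simp add: convex_on_def)
  ultimately have "\<theta> (H (u *\<^sub>R x + v *\<^sub>R y)) \<le> \<theta> (u * H x + v * H y)"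
    using HT \<theta>(2) by (simp add: mono_onD)
  also have "\<dots> \<le> u * \<theta> (H x) + v * \<theta> (H y)"
    using \<theta>(1) HT uv by (simp add: convex_on_def)
  finally show "\<theta> (H (u *\<^sub>R x + v *\<^sub>R y)) \<le> u * \<theta> (H x) + v * \<theta> (H y)" .
qed

lemma convex_on_sqdist: "convex_on UNIV (\<lambda>z. (norm (z - x0))\<^sup>2)"
proof -
  have "convex_on {0..} (\<lambda>t::real. t\<^sup>2)"
    by (rule convex_on_subset[OF convex_power2]) auto
  moreover have "mono_on {0..} (\<lambda>t::real. t\<^sup>2)"
    by (auto intro: mono_onI power_mono)
  moreover have "convex_on UNIV (\<lambda>z. dist x0 z)" by (rule convex_on_dist) simp
  ultimately have "convex_on UNIV (\<lambda>z. (dist x0 z)\<^sup>2)"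
    by (rule convex_on_compose_mono_on) auto
  then show ?thesis by (simp add: dist_norm norm_minus_commute)
qed

lemma csubdiff_scaled_sqdist:
  fixes x0 :: "'a::real_inner"
  assumes lam: "0 < lam" and v: "v \<in> csubdiff (\<lambda>z. lam / 2 * (norm (z - x0))\<^sup>2) x"
  shows "v = lam *\<^sub>R (x - x0)"
proof -
  define d where "d = v - lam *\<^sub>R (x - x0)"
  define t where "t = 1 / lam"
  define P where "P = inner (x - x0) d"
  have "lam / 2 * (norm (x - x0))\<^sup>2 + inner v (t *\<^sub>R d) \<le> lam / 2 * (norm (x - x0 + t *\<^sub>R d))\<^sup>2"
    using v[unfolded csubdiff_def, simplified, rule_format, of "x + t *\<^sub>R d"]
    by (simp add: algebra_simps)
  moreover have "(norm (x - x0 + t *\<^sub>R d))\<^sup>2 = (norm (x - x0))\<^sup>2 + 2 * t * P + t\<^sup>2 * inner d d"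
    unfolding power2_norm_eq_inner P_def
    by (simp add: inner_add_left inner_add_right inner_commute power2_eq_square algebra_simps)
  moreover have "inner v (t *\<^sub>R d) = t * inner d d + (lam * t) * P"
    by (simp add: d_def P_def inner_diff_left inner_commute algebra_simps)
  moreover have "lam / 2 * (2 * t * P + t\<^sup>2 * inner d d) = (lam * t) * P + (lam * t) * (t / 2 * inner d d)"
    by (simp add: power2_eq_square algebra_simps)
  moreover have "lam * t = 1" using lam by (simp add: t_def)
  ultimately have "t * inner d d \<le> t / 2 * inner d d"
    by (simp add: distrib_left)
  then have "inner d d \<le> 0" using lam by (simp add: t_def field_simps)
  then have "d = 0" by (metis inner_gt_zero_iff not_le)
  then show ?thesis by (simp add: d_def)
qed

lemma convex_upper_image:
  assumes F: "convex_on D F" and G: "convex_on D G"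
  shows "convex {(s, t). \<exists>z\<in>D. F z \<le> s \<and> G z \<le> t}"
proof (rule convexI)
  fix p q :: "real \<times> real" and u v :: real
  assume "p \<in> {(s, t). \<exists>z\<in>D. F z \<le> s \<and> G z \<le> t}" "q \<in> {(s, t). \<exists>z\<in>D. F z \<le> s \<and> G z \<le> t}"
    and uv: "0 \<le> u" "0 \<le> v" "u + v = 1"
  then obtain z1 z2 where z: "z1 \<in> D" "F z1 \<le> fst p" "G z1 \<le> snd p"
    "z2 \<in> D" "F z2 \<le> fst q" "G z2 \<le> snd q" by auto
  have "u *\<^sub>R z1 + v *\<^sub>R z2 \<in> D"
    using z uv convex_on_imp_convex[OF F] by (simp add: convex_def)
  moreover have "F (u *\<^sub>R z1 + v *\<^sub>R z2) \<le> u * F z1 + v * F z2"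
    using F z uv by (simp add: convex_on_def)
  moreover have "\<dots> \<le> u * fst p + v * fst q"
    using z uv by (intro add_mono mult_left_mono) auto
  moreover have "G (u *\<^sub>R z1 + v *\<^sub>R z2) \<le> u * G z1 + v * G z2"
    using G z uv by (simp add: convex_on_def)
  moreover have "\<dots> \<le> u * snd p + v * snd q"
    using z uv by (intro add_mono mult_left_mono) auto
  ultimately show "u *\<^sub>R p + v *\<^sub>R q \<in> {(s, t). \<exists>z\<in>D. F z \<le> s \<and> G z \<le> t}"
    by (simp add: case_prod_unfold) (meson order_trans)
qed

lemma image_space_separation:
  fixes F G :: "'a::real_vector \<Rightarrow> real"
  assumes F: "convex_on D F" and G: "convex_on D G" and x: "x \<in> D"
    and S: "convex S" "S \<noteq> {}"
    and disjoint: "\<And>z s t. z \<in> D \<Longrightarrow> (s, t) \<in> S \<Longrightarrow> s < F z \<or> t < G z"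
  shows "\<exists>\<alpha> \<beta>. 0 \<le> \<alpha> \<and> 0 \<le> \<beta> \<and> (\<alpha> \<noteq> 0 \<or> \<beta> \<noteq> 0) \<and>
           (\<forall>z\<in>D. \<forall>s t. (s, t) \<in> S \<longrightarrow> \<alpha> * s + \<beta> * t \<le> \<alpha> * F z + \<beta> * G z)"
proof -
  define T where "T = {(s, t). \<exists>z\<in>D. F z \<le> s \<and> G z \<le> t}"
  have "(F x, G x) \<in> T" using x by (auto simp: T_def)
  moreover have "S \<inter> T = {}" using disjoint by (fastforce simp: T_def)
  ultimately obtain a b where a: "a \<noteq> 0" and aS: "\<forall>p\<in>S. inner a p \<le> b"
    and aT: "\<forall>p\<in>T. b \<le> inner a p"
    using separating_hyperplane_sets[OF S(1) convex_upper_image[OF F G] S(2)]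
    unfolding T_def by blast
  obtain \<alpha> \<beta> where ab: "a = (\<alpha>, \<beta>)" by (cases a)
  have above_b: "b \<le> \<alpha> * s + \<beta> * t" if "z \<in> D" "F z \<le> s" "G z \<le> t" for z s t
    using aT[rule_format, of "(s, t)"] that by (auto simp: T_def ab)
  have "0 \<le> \<alpha>"
  proof (rule nonneg_of_lower_bound)
    fix r :: real assume "0 \<le> r"
    show "b \<le> (\<alpha> * F x + \<beta> * G x) + \<alpha> * r"
      using above_b[OF x, of "F x + r" "G x"] \<open>0 \<le> r\<close> by (simp add: algebra_simps)
  qed
  moreover have "0 \<le> \<beta>"
  proof (rule nonneg_of_lower_bound)
    fix r :: real assume "0 \<le> r"
    show "b \<le> (\<alpha> * F x + \<beta> * G x) + \<beta> * r"
      using above_b[OF x, of "F x" "G x + r"] \<open>0 \<le> r\<close> by (simp add: algebra_simps)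
  qed
  moreover have "\<alpha> * s + \<beta> * t \<le> \<alpha> * F z + \<beta> * G z" if "z \<in> D" "(s, t) \<in> S" for z s t
    using aS[rule_format, OF that(2)] above_b[OF that(1) order_refl order_refl] by (simp add: ab)
  moreover have "\<alpha> \<noteq> 0 \<or> \<beta> \<noteq> 0" using a ab by (auto simp: zero_prod_def)
  ultimately show ?thesis by blast
qed

lemma fritz_john_single:
  fixes F C :: "'a::real_vector \<Rightarrow> real"
  assumes F: "convex_on D F" and C: "convex_on D C" and x: "x \<in> D" "C x \<le> 0"
    and min: "\<And>z. z \<in> D \<Longrightarrow> C z \<le> 0 \<Longrightarrow> F x \<le> F z"
  shows "\<exists>c \<nu>. 0 \<le> c \<and> 0 \<le> \<nu> \<and> (c \<noteq> 0 \<or> \<nu> \<noteq> 0) \<and> \<nu> * C x = 0 \<and>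
           (\<forall>z\<in>D. c * F x + \<nu> * C x \<le> c * F z + \<nu> * C z)"
proof -
  have "convex ({..<F x} \<times> {..0::real})" by (intro convex_Times convex_real_interval)
  moreover have "(F x - 1, 0) \<in> {..<F x} \<times> {..0::real}" by simp
  moreover have "s < F z \<or> t < C z" if "z \<in> D" "(s, t) \<in> {..<F x} \<times> {..0}" for z s t
    using min[OF that(1)] that(2) by fastforce
  ultimately obtain \<alpha> \<beta> where ab: "0 \<le> \<alpha>" "0 \<le> \<beta>" "\<alpha> \<noteq> 0 \<or> \<beta> \<noteq> 0"
    and sep: "\<And>z s t. z \<in> D \<Longrightarrow> s < F x \<Longrightarrow> t \<le> 0 \<Longrightarrow> \<alpha> * s + \<beta> * t \<le> \<alpha> * F z + \<beta> * C z"
    using image_space_separation[OF F C x(1), of "{..<F x} \<times> {..0}"] by blast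
  have bound: "\<alpha> * F x \<le> \<alpha> * F z + \<beta> * C z" if "z \<in> D" for z
  proof -
    have "0 + \<alpha> * F x \<le> \<alpha> * F z + \<beta> * C z"
      by (rule affine_le_of_less[OF ab(1)]) (use sep[OF that _ order_refl] in auto)
    then show ?thesis by simp
  qed
  have "0 \<le> \<beta> * C x" using bound[OF x(1)] by simp
  moreover have "\<beta> * C x \<le> 0" using ab(2) x(2) by (rule mult_nonneg_nonpos)
  ultimately have "\<beta> * C x = 0" by simp
  then show ?thesis using ab bound by (intro exI[of _ \<alpha>] exI[of _ \<beta>]) auto
qed

lemma csubdiff_mono_nonneg:
  fixes \<theta> :: "real \<Rightarrow> real"
  assumes "mono \<theta>" "\<mu> \<in> csubdiff \<theta> t"
  shows "0 \<le> \<mu>"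
proof -
  have "\<theta> t + \<mu> * ((t - 1) - t) \<le> \<theta> (t - 1)" using assms(2) unfolding csubdiff_real by blast
  moreover have "\<theta> (t - 1) \<le> \<theta> t" using assms(1) by (simp add: monoD)
  ultimately show ?thesis by simp
qed

lemma csubdiff_comp_mono_at_minimum:
  fixes \<theta> :: "real \<Rightarrow> real" and H G :: "'a::real_vector \<Rightarrow> real"
  assumes \<theta>: "convex_on UNIV \<theta>" "mono \<theta>" and H: "convex_on UNIV H" and G: "convex_on UNIV G"
    and min: "\<And>z. \<theta> (H x) + G x \<le> \<theta> (H z) + G z"
  shows "\<exists>\<mu>\<in>csubdiff \<theta> (H x). \<forall>z. \<mu> * H x + G x \<le> \<mu> * H z + G z"
proof -
  define v where "v = \<theta> (H x) + G x"
  define S where "S = {p. fst p \<in> UNIV \<and> snd p < v - \<theta> (fst p)}"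
  have "concave_on UNIV (\<lambda>s. v - \<theta> s)"
    using \<theta>(1) by (intro concave_on_diff) (simp_all add: concave_on_const)
  then have S: "convex S" unfolding S_def by (rule convex_strict_hypograph)
  have "(H x, G x - 1) \<in> S" by (simp add: S_def v_def)
  then have S_ne: "S \<noteq> {}" by blast
  have disjoint: "s < H z \<or> t < G z" if "(s, t) \<in> S" for z s t
  proof (rule ccontr)
    assume "\<not> (s < H z \<or> t < G z)"
    then have "\<theta> (H z) + G z \<le> \<theta> s + t" using \<theta>(2) by (simp add: monoD add_mono)
    then show False using that min[of z] by (simp add: S_def v_def)
  qed
  obtain \<alpha> \<beta> where ab: "0 \<le> \<alpha>" "0 \<le> \<beta>" "\<alpha> \<noteq> 0 \<or> \<beta> \<noteq> 0"
    and sep0: "\<forall>z\<in>UNIV. \<forall>s t. (s, t) \<in> S \<longrightarrow> \<alpha> * s + \<beta> * t \<le> \<alpha> * H z + \<beta> * G z"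
    using image_space_separation[OF H G UNIV_I S S_ne disjoint] by blast
  have sep: "\<alpha> * s + \<beta> * t \<le> \<alpha> * H z + \<beta> * G z" if "t < v - \<theta> s" for z s t
    using sep0 that by (simp add: S_def)
  have "\<beta> \<noteq> 0"
  proof
    assume "\<beta> = 0"
    then have "\<alpha> * (H x + 1) \<le> \<alpha> * H x"
      using sep[of "v - \<theta> (H x + 1) - 1" "H x + 1" x] by simp
    then show False using ab \<open>\<beta> = 0\<close> by simp
  qed
  with ab(2) have \<beta>: "0 < \<beta>" by simp
  have sep': "\<alpha> * s + \<beta> * (v - \<theta> s) \<le> \<alpha> * H z + \<beta> * G z" for s z
    by (rule affine_le_of_less) (use \<beta> sep in auto)
  define \<mu> where "\<mu> = \<alpha> / \<beta>"
  have "\<theta> (H x) + \<mu> * (s - H x) \<le> \<theta> s" for s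
  proof -
    have "\<beta> * (\<theta> (H x) + \<mu> * (s - H x)) \<le> \<beta> * \<theta> s"
      using sep'[of s x] \<beta> by (simp add: \<mu>_def v_def algebra_simps)
    then show ?thesis using \<beta> by simp
  qed
  moreover have "\<mu> * H x + G x \<le> \<mu> * H z + G z" for z
  proof -
    have "\<beta> * (\<mu> * H x + G x) \<le> \<beta> * (\<mu> * H z + G z)"
      using sep'[of "H x" z] \<beta> by (simp add: \<mu>_def v_def algebra_simps)
    then show ?thesis using \<beta> by simp
  qed
  ultimately show ?thesis by (auto simp: csubdiff_real)
qed

lemma sum_insert_fun_upd:
  assumes "finite A" "a \<notin> A"
  shows "(\<Sum>x\<in>insert a A. (f(a := y)) x * g x) = y * g a + (\<Sum>x\<in>A. f x * g x)"
proof -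
  have "(\<Sum>x\<in>A. (f(a := y)) x * g x) = (\<Sum>x\<in>A. f x * g x)"
    using assms(2) by (intro sum.cong) auto
  then show ?thesis using assms by simp
qed

lemma csubdiff_comp_mono_sum_at_minimum:
  fixes \<theta> :: "'j \<Rightarrow> real \<Rightarrow> real" and H :: "'j \<Rightarrow> 'a::real_vector \<Rightarrow> real"
  assumes "finite J"
    and \<theta>H: "\<And>j. j \<in> J \<Longrightarrow> convex_on UNIV (\<theta> j) \<and> mono (\<theta> j) \<and> convex_on UNIV (H j)"
    and G: "convex_on UNIV G"
    and min: "\<And>z. (\<Sum>j\<in>J. \<theta> j (H j x)) + G x \<le> (\<Sum>j\<in>J. \<theta> j (H j z)) + G z"
  shows "\<exists>\<mu>. (\<forall>j\<in>J. \<mu> j \<in> csubdiff (\<theta> j) (H j x)) \<and>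
             (\<forall>z. (\<Sum>j\<in>J. \<mu> j * H j x) + G x \<le> (\<Sum>j\<in>J. \<mu> j * H j z) + G z)"
  using assms
proof (induction J arbitrary: G rule: finite_induct)
  case empty
  then show ?case by simp
next
  case (insert i J)
  have \<theta>H_i: "convex_on UNIV (\<theta> i)" "mono (\<theta> i)" "convex_on UNIV (H i)"
    using insert.prems(1)[of i] by simp_all
  have "convex_on UNIV (\<lambda>z. \<theta> j (H j z))" if "j \<in> J" for j
  proof -
    have "convex_on UNIV (\<theta> j) \<and> mono (\<theta> j) \<and> convex_on UNIV (H j)"
      using insert.prems(1)[of j] that by simp
    then show ?thesis by (intro convex_on_compose_mono_on[where T = UNIV and \<theta> = "\<theta> j" and H = "H j"]) simp_all
  qed
  then have "convex_on UNIV (\<lambda>z. (\<Sum>j\<in>J. \<theta> j (H j z)) + G z)"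
    using insert.hyps(1) insert.prems(2) by (intro convex_on_add convex_on_sum_fun) auto
  moreover have "\<theta> i (H i x) + ((\<Sum>j\<in>J. \<theta> j (H j x)) + G x)
      \<le> \<theta> i (H i z) + ((\<Sum>j\<in>J. \<theta> j (H j z)) + G z)" for z
    using insert.prems(3)[of z] insert.hyps by (simp add: add.assoc)
  ultimately obtain \<mu>i where \<mu>i: "\<mu>i \<in> csubdiff (\<theta> i) (H i x)"
    and min_i: "\<forall>z. \<mu>i * H i x + ((\<Sum>j\<in>J. \<theta> j (H j x)) + G x)
                    \<le> \<mu>i * H i z + ((\<Sum>j\<in>J. \<theta> j (H j z)) + G z)"
    using csubdiff_comp_mono_at_minimum[OF \<theta>H_i] by blast
  have "convex_on UNIV (\<lambda>z. \<mu>i * H i z + G z)"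
    using csubdiff_mono_nonneg[OF \<theta>H_i(2) \<mu>i] \<theta>H_i(3) insert.prems(2)
    by (intro convex_on_add convex_on_cmul)
  moreover have "(\<Sum>j\<in>J. \<theta> j (H j x)) + (\<mu>i * H i x + G x)
      \<le> (\<Sum>j\<in>J. \<theta> j (H j z)) + (\<mu>i * H i z + G z)" for z
    using min_i by (simp add: algebra_simps)
  ultimately obtain \<mu> where \<mu>: "\<forall>j\<in>J. \<mu> j \<in> csubdiff (\<theta> j) (H j x)"
    and min_J: "\<forall>z. (\<Sum>j\<in>J. \<mu> j * H j x) + (\<mu>i * H i x + G x)
                    \<le> (\<Sum>j\<in>J. \<mu> j * H j z) + (\<mu>i * H i z + G z)"
    using insert.IH[of "\<lambda>z. \<mu>i * H i z + G z"] insert.prems(1) by blast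
  have sum_upd: "(\<Sum>j\<in>insert i J. (\<mu>(i := \<mu>i)) j * H j z) = \<mu>i * H i z + (\<Sum>j\<in>J. \<mu> j * H j z)" for z
    by (rule sum_insert_fun_upd[OF insert.hyps])
  show ?case
  proof (intro exI[of _ "\<mu>(i := \<mu>i)"] conjI allI ballI)
    fix j assume "j \<in> insert i J"
    then show "(\<mu>(i := \<mu>i)) j \<in> csubdiff (\<theta> j) (H j x)" using \<mu> \<mu>i by auto
  next
    fix z
    show "(\<Sum>j\<in>insert i J. (\<mu>(i := \<mu>i)) j * H j x) + G x
        \<le> (\<Sum>j\<in>insert i J. (\<mu>(i := \<mu>i)) j * H j z) + G z"
      unfolding sum_upd using min_J by (simp add: algebra_simps)
  qed
qed

lemma convex_sublevel:
  assumes "convex_on D C"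
  shows "convex {z \<in> D. C z \<le> 0}"
proof (rule convexI)
  fix x y and u v :: real
  assume "x \<in> {z \<in> D. C z \<le> 0}" "y \<in> {z \<in> D. C z \<le> 0}" "0 \<le> u" "0 \<le> v" "u + v = 1"
  moreover from this have "C (u *\<^sub>R x + v *\<^sub>R y) \<le> u * C x + v * C y"
    using assms by (simp add: convex_on_def)
  moreover have "u * C x + v * C y \<le> 0"
    using calculation by (simp add: add_nonpos_nonpos mult_nonneg_nonpos)
  ultimately show "u *\<^sub>R x + v *\<^sub>R y \<in> {z \<in> D. C z \<le> 0}"
    using convex_on_imp_convex[OF assms] by (simp add: convex_def)
qed

lemma fritz_john:
  fixes F :: "'a::real_vector \<Rightarrow> real" and C :: "'k \<Rightarrow> 'a \<Rightarrow> real"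
  assumes "finite K" and F: "convex_on D F" and C: "\<And>k. k \<in> K \<Longrightarrow> convex_on D (C k)"
    and x: "x \<in> D" "\<And>k. k \<in> K \<Longrightarrow> C k x \<le> 0"
    and min: "\<And>z. z \<in> D \<Longrightarrow> \<forall>k\<in>K. C k z \<le> 0 \<Longrightarrow> F x \<le> F z"
  shows "\<exists>c \<nu>. 0 \<le> c \<and> (\<forall>k\<in>K. 0 \<le> \<nu> k \<and> \<nu> k * C k x = 0) \<and> (c \<noteq> 0 \<or> (\<exists>k\<in>K. \<nu> k \<noteq> 0)) \<and>
           (\<forall>z\<in>D. c * F x + (\<Sum>k\<in>K. \<nu> k * C k x) \<le> c * F z + (\<Sum>k\<in>K. \<nu> k * C k z))"
  using assms
proof (induction K arbitrary: D rule: finite_induct)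
  case empty
  then show ?case by (intro exI[of _ 1]) auto
next
  case (insert i K)
  define D' where "D' = {z \<in> D. C i z \<le> 0}"
  have "convex D'" unfolding D'_def by (rule convex_sublevel) (use insert.prems(2) in simp)
  then have "convex_on D' F" "\<And>k. k \<in> K \<Longrightarrow> convex_on D' (C k)"
    using insert.prems(1,2) by (auto simp: D'_def intro: convex_on_subset)
  moreover have "x \<in> D'" using insert.prems(3,4) by (simp add: D'_def)
  ultimately obtain c' \<nu>' where c': "0 \<le> c'" and \<nu>': "\<forall>k\<in>K. 0 \<le> \<nu>' k \<and> \<nu>' k * C k x = 0"
    and nz': "c' \<noteq> 0 \<or> (\<exists>k\<in>K. \<nu>' k \<noteq> 0)"
    and min': "\<forall>z\<in>D'. c' * F x + (\<Sum>k\<in>K. \<nu>' k * C k x) \<le> c' * F z + (\<Sum>k\<in>K. \<nu>' k * C k z)"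
    using insert.IH[of D'] insert.prems(4,5) by (auto simp: D'_def)
  define F' where "F' z = c' * F z + (\<Sum>k\<in>K. \<nu>' k * C k z)" for z
  have "convex_on D F'"
    unfolding F'_def using c' \<nu>' insert.prems(1,2) insert.hyps(1) convex_on_imp_convex[OF insert.prems(1)]
    by (intro convex_on_add convex_on_cmul convex_on_sum_fun) auto
  moreover have "convex_on D (C i)" using insert.prems(2) by simp
  moreover have "F' x \<le> F' z" if "z \<in> D" "C i z \<le> 0" for z
    using min' that by (simp add: F'_def D'_def)
  ultimately obtain c0 \<nu>0 where c0: "0 \<le> c0" "0 \<le> \<nu>0" "c0 \<noteq> 0 \<or> \<nu>0 \<noteq> 0" "\<nu>0 * C i x = 0"
    and min0: "\<forall>z\<in>D. c0 * F' x + \<nu>0 * C i x \<le> c0 * F' z + \<nu>0 * C i z"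
    using fritz_john_single[of D F' "C i" x] insert.prems(3,4) by auto
  define \<nu> where "\<nu> = (\<lambda>k. c0 * \<nu>' k)(i := \<nu>0)"
  have sum_\<nu>: "(\<Sum>k\<in>insert i K. \<nu> k * C k z) = \<nu>0 * C i z + c0 * (\<Sum>k\<in>K. \<nu>' k * C k z)" for z
    unfolding \<nu>_def sum_insert_fun_upd[OF insert.hyps] by (simp add: sum_distrib_left mult.assoc)
  show ?case
  proof (intro exI[of _ "c0 * c'"] exI[of _ \<nu>] conjI ballI)
    show "0 \<le> c0 * c'" using c0 c' by simp
  next
    fix k assume "k \<in> insert i K"
    then show "0 \<le> \<nu> k" "\<nu> k * C k x = 0" using c0 \<nu>' insert.hyps by (auto simp: \<nu>_def)
  next
    show "c0 * c' \<noteq> 0 \<or> (\<exists>k\<in>insert i K. \<nu> k \<noteq> 0)"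
      using c0(3) nz' insert.hyps by (auto simp: \<nu>_def)
  next
    fix z assume "z \<in> D"
    then show "c0 * c' * F x + (\<Sum>k\<in>insert i K. \<nu> k * C k x) \<le> c0 * c' * F z + (\<Sum>k\<in>insert i K. \<nu> k * C k z)"
      using min0 unfolding sum_\<nu> F'_def by (simp add: algebra_simps)
  qed
qed

lemma kkt_composite:
  fixes \<theta> :: "'j \<Rightarrow> real \<Rightarrow> real" and H :: "'j \<Rightarrow> 'a::euclidean_space \<Rightarrow> real"
    and C :: "'k \<Rightarrow> 'a \<Rightarrow> real" and q :: "'a \<Rightarrow> real"
  assumes J: "finite J" and K: "finite K"
    and \<theta>H: "\<And>j. j \<in> J \<Longrightarrow> convex_on UNIV (\<theta> j) \<and> mono (\<theta> j) \<and> convex_on UNIV (H j)"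
    and C: "\<And>k. k \<in> K \<Longrightarrow> convex_on UNIV (C k) \<and> C k x \<le> 0"
    and q: "convex_on UNIV q"
    and min: "\<And>z. \<forall>k\<in>K. C k z \<le> 0 \<Longrightarrow>
                (\<Sum>j\<in>J. \<theta> j (H j x)) + q x \<le> (\<Sum>j\<in>J. \<theta> j (H j z)) + q z"
    and CQ: "\<And>\<nu> w. \<forall>k\<in>K. 0 \<le> \<nu> k \<and> \<nu> k * C k x = 0 \<and> w k \<in> csubdiff (C k) x \<Longrightarrow>
                (\<Sum>k\<in>K. \<nu> k *\<^sub>R w k) = 0 \<Longrightarrow> \<forall>k\<in>K. \<nu> k = 0"
  shows "\<exists>\<mu> \<nu> v w v0. (\<forall>j\<in>J. \<mu> j \<in> csubdiff (\<theta> j) (H j x) \<and> v j \<in> csubdiff (H j) x) \<and>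
           (\<forall>k\<in>K. 0 \<le> \<nu> k \<and> \<nu> k * C k x = 0 \<and> w k \<in> csubdiff (C k) x) \<and> v0 \<in> csubdiff q x \<and>
           (\<Sum>j\<in>J. \<mu> j *\<^sub>R v j) + (\<Sum>k\<in>K. \<nu> k *\<^sub>R w k) + v0 = 0"
proof -
  define F where "F z = (\<Sum>j\<in>J. \<theta> j (H j z)) + q z" for z
  have "convex_on UNIV (\<lambda>z. \<theta> j (H j z))" if "j \<in> J" for j
    using \<theta>H[OF that]
    by (intro convex_on_compose_mono_on[where T = UNIV and \<theta> = "\<theta> j" and H = "H j"]) simp_all
  then have "convex_on UNIV F"
    unfolding F_def using J q by (intro convex_on_add convex_on_sum_fun) auto
  moreover have "convex_on UNIV (C k)" "C k x \<le> 0" if "k \<in> K" for k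
    using C[OF that] by simp_all
  moreover have "F x \<le> F z" if "\<forall>k\<in>K. C k z \<le> 0" for z
    using min[OF that] by (simp add: F_def)
  ultimately obtain c \<nu> where c: "0 \<le> c" and \<nu>: "\<forall>k\<in>K. 0 \<le> \<nu> k \<and> \<nu> k * C k x = 0"
    and nz: "c \<noteq> 0 \<or> (\<exists>k\<in>K. \<nu> k \<noteq> 0)"
    and FJ: "\<forall>z\<in>UNIV. c * F x + (\<Sum>k\<in>K. \<nu> k * C k x) \<le> c * F z + (\<Sum>k\<in>K. \<nu> k * C k z)"
    using fritz_john[OF K, where D = UNIV and F = F and C = C and x = x] by blast
  have "c \<noteq> 0"
  proof
    assume "c = 0"
    then have opt: "0 \<in> csubdiff (\<lambda>z. \<Sum>k\<in>K. \<nu> k * C k z) x"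
      using FJ by (simp add: zero_in_csubdiff_iff)
    have "0 \<le> \<nu> k \<and> convex_on UNIV (C k)" if "k \<in> K" for k
      using \<nu> C that by simp
    then obtain w where w: "\<forall>k\<in>K. w k \<in> csubdiff (C k) x" and sum_w: "0 = (\<Sum>k\<in>K. \<nu> k *\<^sub>R w k)"
      using csubdiff_weighted_sum_decompose[OF K _ opt] by blast
    have "\<forall>k\<in>K. 0 \<le> \<nu> k \<and> \<nu> k * C k x = 0 \<and> w k \<in> csubdiff (C k) x"
      using \<nu> w by blast
    then have "\<forall>k\<in>K. \<nu> k = 0" using CQ sum_w[symmetric] by blast
    then show False using nz \<open>c = 0\<close> by blast
  qed
  with c have c: "0 < c" by simp
  define \<rho> where "\<rho> k = \<nu> k / c" for k
  define G where "G z = q z + (\<Sum>k\<in>K. \<rho> k * C k z)" for z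
  have \<rho>: "0 \<le> \<rho> k" if "k \<in> K" for k using \<nu> c that by (simp add: \<rho>_def)
  have G: "convex_on UNIV G"
    unfolding G_def using K q C \<rho> by (intro convex_on_add convex_on_sum_fun convex_on_cmul) auto
  have min_G: "(\<Sum>j\<in>J. \<theta> j (H j x)) + G x \<le> (\<Sum>j\<in>J. \<theta> j (H j z)) + G z" for z
  proof -
    have "c * ((\<Sum>j\<in>J. \<theta> j (H j x)) + G x) \<le> c * ((\<Sum>j\<in>J. \<theta> j (H j z)) + G z)"
      using FJ c by (simp add: F_def G_def \<rho>_def sum_distrib_left algebra_simps)
    then show ?thesis using c by simp
  qed
  obtain \<mu> where \<mu>: "\<forall>j\<in>J. \<mu> j \<in> csubdiff (\<theta> j) (H j x)"
    and min\<mu>: "\<forall>z. (\<Sum>j\<in>J. \<mu> j * H j x) + G x \<le> (\<Sum>j\<in>J. \<mu> j * H j z) + G z"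
    using csubdiff_comp_mono_sum_at_minimum[where \<theta> = \<theta> and H = H, OF J \<theta>H G min_G] by blast
  define I where "I = J <+> K"
  define wt where "wt = case_sum \<mu> \<rho>"
  define \<Phi> where "\<Phi> = case_sum H C"
  have sum_I: "(\<Sum>i\<in>I. wt i * \<Phi> i z) = (\<Sum>j\<in>J. \<mu> j * H j z) + (\<Sum>k\<in>K. \<rho> k * C k z)" for z
    unfolding I_def wt_def \<Phi>_def using J K by (simp add: sum.Plus comp_def)
  have \<mu>_nonneg: "0 \<le> \<mu> j" if "j \<in> J" for j
    using csubdiff_mono_nonneg \<theta>H[OF that] \<mu> that by blast
  have wt\<Phi>: "0 \<le> wt i \<and> convex_on UNIV (\<Phi> i)" if "i \<in> I" for i
    using that \<theta>H C \<rho> \<mu>_nonneg by (auto simp: I_def wt_def \<Phi>_def)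
  have conv: "convex_on UNIV (\<lambda>z. \<Sum>i\<in>I. wt i * \<Phi> i z)"
    using wt\<Phi> J K by (intro convex_on_sum_fun convex_on_cmul) (auto simp: I_def)
  have "0 \<in> csubdiff (\<lambda>z. (\<Sum>i\<in>I. wt i * \<Phi> i z) + q z) x"
    using min\<mu> by (simp add: zero_in_csubdiff_iff sum_I G_def algebra_simps)
  then obtain a v0 where a: "a \<in> csubdiff (\<lambda>z. \<Sum>i\<in>I. wt i * \<Phi> i z) x"
    and v0: "v0 \<in> csubdiff q x" and "0 = a + v0"
    using csubdiff_add_decompose[OF conv q] by blast
  then have a_v0: "a + v0 = 0" by simp
  obtain u where u: "\<forall>i\<in>I. u i \<in> csubdiff (\<Phi> i) x" and "a = (\<Sum>i\<in>I. wt i *\<^sub>R u i)"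
    using csubdiff_weighted_sum_decompose[OF _ wt\<Phi> a] J K by (auto simp: I_def)
  then have "a = (\<Sum>j\<in>J. \<mu> j *\<^sub>R u (Inl j)) + (\<Sum>k\<in>K. \<rho> k *\<^sub>R u (Inr k))"
    unfolding I_def wt_def using J K by (simp add: sum.Plus comp_def)
  moreover have "\<forall>j\<in>J. u (Inl j) \<in> csubdiff (H j) x" "\<forall>k\<in>K. u (Inr k) \<in> csubdiff (C k) x"
    using u[unfolded I_def] by (metis InlI \<Phi>_def sum.case(1), metis InrI \<Phi>_def sum.case(2))
  moreover have "\<forall>k\<in>K. 0 \<le> \<rho> k \<and> \<rho> k * C k x = 0"
    using \<nu> \<rho> by (simp add: \<rho>_def)
  ultimately show ?thesis
    using \<mu> v0 a_v0
    by (intro exI[of _ \<mu>] exI[of _ \<rho>] exI[of _ "\<lambda>j. u (Inl j)"] exI[of _ "\<lambda>k. u (Inr k)"] exI[of _ v0])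
      simp
qed

lemma convex_on_reflect:
  fixes \<theta> :: "real \<Rightarrow> real"
  assumes "convex_on UNIV \<theta>"
  shows "convex_on UNIV (\<lambda>t. \<theta> (- t))"
  unfolding convex_on_def
proof (intro conjI ballI allI impI)
  fix x y u v :: real assume "0 \<le> u" "0 \<le> v" "u + v = 1"
  then have "\<theta> (u *\<^sub>R (- x) + v *\<^sub>R (- y)) \<le> u * \<theta> (- x) + v * \<theta> (- y)"
    using assms unfolding convex_on_def by blast
  moreover have "u *\<^sub>R (- x) + v *\<^sub>R (- y) = - (u *\<^sub>R x + v *\<^sub>R y)" by simp
  ultimately show "\<theta> (- (u *\<^sub>R x + v *\<^sub>R y)) \<le> u * \<theta> (- x) + v * \<theta> (- y)" by metis
qed simp

lemma mono_on_right_of_minimizer: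
  fixes \<theta> :: "real \<Rightarrow> real"
  assumes "convex_on UNIV \<theta>" and min: "\<forall>w. \<theta> z \<le> \<theta> w"
  shows "mono_on {z..} \<theta>"
proof (rule mono_onI)
  fix s t assume "s \<in> {z..}" "t \<in> {z..}" "s \<le> t"
  then have "\<theta> s \<le> max (\<theta> z) (\<theta> t)"
    using convex_on_subset[OF assms(1)] by (intro convex_on_le_max) auto
  then show "\<theta> s \<le> \<theta> t" using min by simp
qed

lemma convex_on_max_const: "convex_on UNIV (\<lambda>x::real. max x z)"
proof (rule convex_onI)
  fix t x y :: real assume "0 < t" "t < 1"
  then have "(1 - t) * x \<le> (1 - t) * max x z" "t * y \<le> t * max y z"
    "(1 - t) * z \<le> (1 - t) * max x z" "t * z \<le> t * max y z"
    by (simp_all add: mult_left_mono)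
  moreover have "z = (1 - t) * z + t * z" by (simp add: algebra_simps)
  ultimately show "max ((1 - t) *\<^sub>R x + t *\<^sub>R y) z \<le> (1 - t) * max x z + t * max y z"
    by simp
qed simp

lemma convex_mono_max_minimizer:
  fixes \<theta> :: "real \<Rightarrow> real"
  assumes "convex_on UNIV \<theta>" and min: "\<forall>w. \<theta> z \<le> \<theta> w"
  shows "convex_on UNIV (\<lambda>x. \<theta> (max x z)) \<and> mono (\<lambda>x. \<theta> (max x z))"
proof
  have mono_z: "mono_on {z..} \<theta>" by (rule mono_on_right_of_minimizer[OF assms])
  have "convex_on {z..} \<theta>" by (rule convex_on_subset[OF assms(1)]) auto
  then show "convex_on UNIV (\<lambda>x. \<theta> (max x z))"
    by (rule convex_on_compose_mono_on[OF _ mono_z convex_on_max_const]) auto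
  show "mono (\<lambda>x. \<theta> (max x z))"
  proof (rule monoI)
    fix x y :: real assume "x \<le> y"
    then show "\<theta> (max x z) \<le> \<theta> (max y z)" by (intro mono_onD[OF mono_z]) auto
  qed
qed

lemma convex_real_has_minimizer:
  fixes \<theta> :: "real \<Rightarrow> real"
  assumes \<theta>: "convex_on UNIV \<theta>" and "\<not> mono \<theta>" "\<not> antimono \<theta>"
  shows "\<exists>z. \<forall>w. \<theta> z \<le> \<theta> w"
proof -
  obtain s t where st: "s \<le> t" "\<theta> t < \<theta> s" using \<open>\<not> mono \<theta>\<close> by (auto simp: mono_def not_le)
  obtain s' t' where st': "s' \<le> t'" "\<theta> s' < \<theta> t'" using \<open>\<not> antimono \<theta>\<close> by (auto simp: antimono_def not_le)
  define L U where "L = min s s'" and "U = max t t'"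
  have "continuous_on {L..U} \<theta>"
    using convex_on_continuous[OF open_UNIV \<theta>] by (rule continuous_on_subset) simp
  moreover have "L \<le> U" using st st' by (simp add: L_def U_def)
  ultimately obtain z where "z \<in> {L..U}" and z: "\<And>y. y \<in> {L..U} \<Longrightarrow> \<theta> z \<le> \<theta> y"
    using continuous_attains_inf[OF compact_Icc] by (metis atLeastAtMost_iff empty_iff order_refl)
  have le_max: "\<theta> b \<le> max (\<theta> a) (\<theta> c)" if "a \<le> b" "b \<le> c" for a b c
    using convex_on_subset[OF \<theta>] that by (intro convex_on_le_max) auto
  have "\<theta> z \<le> \<theta> w" for w
  proof (cases "w < L")
    case True
    then have "\<theta> s \<le> \<theta> w" using le_max[of w s t] st by (simp add: L_def)
    moreover have "\<theta> z \<le> \<theta> s" using z st st' by (simp add: L_def U_def)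
    ultimately show ?thesis by simp
  next
    case False
    show ?thesis
    proof (cases "U < w")
      case True
      then have "\<theta> t' \<le> \<theta> w" using le_max[of s' t' w] st' by (simp add: U_def)
      moreover have "\<theta> z \<le> \<theta> t'" using z st st' by (simp add: L_def U_def)
      ultimately show ?thesis by simp
    qed (use z \<open>\<not> w < L\<close> in simp)
  qed
  then show ?thesis by blast
qed

definition up_part :: "(real \<Rightarrow> real) \<Rightarrow> real \<Rightarrow> real" where
  "up_part \<phi> t = real_of_ereal (phi_up (\<lambda>s. ereal (\<phi> s)) t)"

definition down_part :: "(real \<Rightarrow> real) \<Rightarrow> real \<Rightarrow> real" where
  "down_part \<phi> t = real_of_ereal (phi_down (\<lambda>s. ereal (\<phi> s)) t)"

lemma phi_up_ereal: "phi_up (\<lambda>s. ereal (\<phi> s)) = (\<lambda>t. ereal (up_part \<phi> t))"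
  by (auto simp: up_part_def phi_up_def)

lemma phi_down_ereal: "phi_down (\<lambda>s. ereal (\<phi> s)) = (\<lambda>t. ereal (down_part \<phi> t))"
  by (auto simp: down_part_def phi_down_def)

lemma minimizer_ereal:
  assumes "\<exists>z. \<forall>w. \<theta> z \<le> \<theta> w"
  shows "\<forall>w. \<theta> (minimizer (\<lambda>s. ereal (\<theta> s))) \<le> \<theta> w"
  using someI_ex[of "\<lambda>z. \<forall>w. \<theta> z \<le> \<theta> w"] assms by (simp add: minimizer_def)

lemma up_part_convex_mono:
  fixes \<phi> :: "real \<Rightarrow> real"
  assumes \<phi>: "convex_on UNIV \<phi>"
  shows "convex_on UNIV (up_part \<phi>) \<and> mono (up_part \<phi>)"
proof -
  have nd: "nondecr (\<lambda>s. ereal (\<phi> s)) \<longleftrightarrow> mono \<phi>" by (simp add: nondecr_def mono_def)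
  have ni: "nonincr (\<lambda>s. ereal (\<phi> s)) \<longleftrightarrow> antimono \<phi>" by (simp add: nonincr_def antimono_def)
  consider "mono \<phi>" | "\<not> mono \<phi>" "antimono \<phi>" | "\<not> mono \<phi>" "\<not> antimono \<phi>" by blast
  then show ?thesis
  proof cases
    case 1
    then have "up_part \<phi> = \<phi>" by (simp add: up_part_def phi_up_def nd fun_eq_iff)
    then show ?thesis using \<phi> 1 by simp
  next
    case 2
    then have "up_part \<phi> = (\<lambda>_. 0)" by (simp add: up_part_def phi_up_def nd ni fun_eq_iff)
    then show ?thesis by (simp add: convex_on_const mono_def)
  next
    case 3
    define z where "z = minimizer (\<lambda>s. ereal (\<phi> s))"
    have "up_part \<phi> = (\<lambda>t. \<phi> (max t z))"
      using 3 by (simp add: up_part_def phi_up_def nd ni z_def fun_eq_iff max_def)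
    then show ?thesis
      using convex_mono_max_minimizer[OF \<phi>] minimizer_ereal convex_real_has_minimizer[OF \<phi> 3]
      by (simp add: z_def)
  qed
qed

lemma down_part_reflect_convex_mono:
  fixes \<phi> :: "real \<Rightarrow> real"
  assumes \<phi>: "convex_on UNIV \<phi>"
  shows "convex_on UNIV (\<lambda>t. down_part \<phi> (- t)) \<and> mono (\<lambda>t. down_part \<phi> (- t))"
proof -
  have nd: "nondecr (\<lambda>s. ereal (\<phi> s)) \<longleftrightarrow> mono \<phi>" by (simp add: nondecr_def mono_def)
  have ni: "nonincr (\<lambda>s. ereal (\<phi> s)) \<longleftrightarrow> antimono \<phi>" by (simp add: nonincr_def antimono_def)
  consider "mono \<phi>" | "\<not> mono \<phi>" "antimono \<phi>" | "\<not> mono \<phi>" "\<not> antimono \<phi>" by blast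
  then show ?thesis
  proof cases
    case 1
    then have "down_part \<phi> = (\<lambda>_. 0)" by (simp add: down_part_def phi_down_def nd fun_eq_iff)
    then show ?thesis by (simp add: convex_on_const mono_def)
  next
    case 2
    then have "down_part \<phi> = \<phi>" by (simp add: down_part_def phi_down_def nd ni fun_eq_iff)
    then show ?thesis
      using convex_on_reflect[OF \<phi>] 2 by (simp add: antimono_def mono_def)
  next
    case 3
    define z where "z = minimizer (\<lambda>s. ereal (\<phi> s))"
    have "\<forall>w. \<phi> z \<le> \<phi> w"
      using minimizer_ereal convex_real_has_minimizer[OF \<phi> 3] by (simp add: z_def)
    then have "\<forall>w. \<phi> (- (- z)) \<le> \<phi> (- w)" by simp
    then have cm: "convex_on UNIV (\<lambda>t. \<phi> (- max t (- z))) \<and> mono (\<lambda>t. \<phi> (- max t (- z)))"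
      using convex_mono_max_minimizer[OF convex_on_reflect[OF \<phi>], of "- z"] by simp
    have eq: "down_part \<phi> (- t) = \<phi> (- max t (- z)) - \<phi> z" for t
    proof -
      have "down_part \<phi> s = \<phi> (min s z) - \<phi> z" for s
        using 3 by (simp add: down_part_def phi_down_def nd ni z_def min_def)
      moreover have "min (- t) z = - max t (- z)" by linarith
      ultimately show ?thesis by simp
    qed
    show ?thesis
    proof
      have "convex_on UNIV (\<lambda>t. \<phi> (- max t (- z)) - \<phi> z)"
        using cm by (intro convex_on_diff) (simp_all add: concave_on_const)
      then show "convex_on UNIV (\<lambda>t. down_part \<phi> (- t))" by (simp only: eq)
      show "mono (\<lambda>t. down_part \<phi> (- t))" using cm by (simp add: eq mono_def)
    qed
  qed
qed

lemma esubdiff_ereal: "esubdiff (\<lambda>s. ereal (\<theta> s)) t = csubdiff \<theta> t"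
  by (simp add: esubdiff_def csubdiff_real)

lemma esubdiff_zero: "esubdiff (\<lambda>_. 0) t = {0}"
  using csubdiff_const[of 0 t] esubdiff_ereal[of "\<lambda>_. 0" t] by (simp add: zero_ereal_def)

lemma csubdiff_reflect:
  fixes \<theta> :: "real \<Rightarrow> real"
  shows "\<mu> \<in> csubdiff (\<lambda>s. \<theta> (- s)) (- t) \<longleftrightarrow> - \<mu> \<in> csubdiff \<theta> t"
proof -
  have "(\<forall>s. \<theta> t + \<mu> * (s + t) \<le> \<theta> (- s)) \<longleftrightarrow> (\<forall>s. \<theta> t + - \<mu> * (s - t) \<le> \<theta> s)"
  proof (intro iffI allI)
    fix s assume "\<forall>s. \<theta> t + \<mu> * (s + t) \<le> \<theta> (- s)"
    then have "\<theta> t + \<mu> * (- s + t) \<le> \<theta> (- (- s))" by blast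
    then show "\<theta> t + - \<mu> * (s - t) \<le> \<theta> s" by (simp add: algebra_simps)
  next
    fix s assume "\<forall>s. \<theta> t + - \<mu> * (s - t) \<le> \<theta> s"
    then have "\<theta> t + - \<mu> * (- s - t) \<le> \<theta> (- s)" by blast
    then show "\<theta> t + \<mu> * (s + t) \<le> \<theta> (- s)" by (simp add: algebra_simps)
  qed
  then show ?thesis by (simp add: csubdiff_real)
qed

lemma normal_cone_nonpos_iff:
  assumes "t \<le> 0"
  shows "\<nu> \<in> normal_cone {..0} t \<longleftrightarrow> 0 \<le> \<nu> \<and> \<nu> * t = 0"
proof
  assume "\<nu> \<in> normal_cone {..0} t"
  then have "\<nu> * (s - t) \<le> 0" if "s \<le> 0" for s
    using assms that by (simp add: normal_cone_def)
  from this[of "t - 1"] this[of 0] assms have "0 \<le> \<nu>" "0 \<le> \<nu> * t"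
    by (simp_all add: algebra_simps)
  moreover have "\<nu> * t \<le> 0" using calculation(1) assms by (rule mult_nonneg_nonpos)
  ultimately show "0 \<le> \<nu> \<and> \<nu> * t = 0" by simp
next
  assume \<nu>: "0 \<le> \<nu> \<and> \<nu> * t = 0"
  have "\<nu> * (s - t) \<le> 0" if "s \<le> 0" for s
  proof -
    have "\<nu> * (s - t) = \<nu> * s" using \<nu> by (simp add: right_diff_distrib)
    also have "\<dots> \<le> 0" using \<nu> that by (simp add: mult_nonneg_nonpos)
    finally show ?thesis .
  qed
  then show "\<nu> \<in> normal_cone {..0} t"
    using assms by (simp add: normal_cone_def)
qed

lemma esubdiff_ind_nonpos:
  assumes "t \<le> 0" "0 \<le> \<nu>" "\<nu> * t = 0"
  shows "\<nu> \<in> esubdiff ind_nonpos t"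
proof -
  have "\<nu> \<in> normal_cone {..0} t" using normal_cone_nonpos_iff assms by blast
  then have "\<nu> * (s - t) \<le> 0" if "s \<le> 0" for s
    using assms that by (simp add: normal_cone_def)
  then show ?thesis using assms(1) by (simp add: esubdiff_def ind_nonpos_def)
qed

lemma phi_up_ind_nonpos: "phi_up ind_nonpos = ind_nonpos"
  and phi_down_ind_nonpos: "phi_down ind_nonpos = (\<lambda>_. 0)"
  by (simp_all add: phi_up_def phi_down_def nondecr_def ind_nonpos_def)

lemma convex_on_affine: "convex_on UNIV (\<lambda>z. inner w z + c)"
  using concave_on_affine[of "- w" "- c"] by (simp add: concave_on_def add.commute)

lemma convex_on_f_up:
  assumes "convex_on UNIV (g k p)"
  shows "convex_on UNIV (\<lambda>z. f_up g h a \<alpha>h k p z y)"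
proof -
  have "convex_on UNIV (\<lambda>z. g k p z + (inner (- a k p y) z + (inner (a k p y) y - h k p y + sigma \<alpha>h k p)))"
    using assms convex_on_affine by (rule convex_on_add)
  then show ?thesis by (simp add: f_up_def inner_diff_right algebra_simps)
qed

lemma convex_on_neg_f_lo:
  assumes "convex_on UNIV (h k p)"
  shows "convex_on UNIV (\<lambda>z. - f_lo g h b k p z y)"
proof -
  have "convex_on UNIV (\<lambda>z. h k p z + (inner (- b k p y) z + (inner (b k p y) y - g k p y)))"
    using assms convex_on_affine by (rule convex_on_add)
  then show ?thesis by (simp add: f_lo_def inner_diff_right algebra_simps)
qed

lemma df_up_eq_csubdiff: "df_up g a k p x y = csubdiff (\<lambda>z. f_up g h a \<alpha>h k p z y) x"
proof -
  have "(\<lambda>z. f_up g h a \<alpha>h k p z y)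
      = (\<lambda>z. g k p z + inner (- a k p y) z + (inner (a k p y) y - h k p y + sigma \<alpha>h k p))"
    by (simp add: fun_eq_iff f_up_def inner_diff_right)
  then have "csubdiff (\<lambda>z. f_up g h a \<alpha>h k p z y) x = (\<lambda>v. v + - a k p y) ` csubdiff (g k p) x"
    by (simp only: csubdiff_add_linear)
  then show ?thesis by (simp add: df_up_def)
qed

lemma df_lo_eq_csubdiff: "df_lo h b k p x y = uminus ` csubdiff (\<lambda>z. - f_lo g h b k p z y) x"
proof -
  have "(\<lambda>z. - f_lo g h b k p z y)
      = (\<lambda>z. h k p z + inner (- b k p y) z + (inner (b k p y) y - g k p y))"
    by (simp add: fun_eq_iff f_lo_def inner_diff_right)
  then have "csubdiff (\<lambda>z. - f_lo g h b k p z y) x = (\<lambda>v. v + - b k p y) ` csubdiff (h k p) x"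
    by (simp only: csubdiff_add_linear)
  then show ?thesis by (simp add: df_lo_def image_image)
qed

lemma Fhat_sum_ereal:
  "(\<Sum>p\<in>{1..m1}. Fhat (Phi m1 \<phi>) g h a b \<alpha>h k p z y)
     = ereal (\<Sum>p\<in>{1..m1}. up_part (\<phi> p) (f_up g h a \<alpha>h k p z y) + down_part (\<phi> p) (f_lo g h b k p z y))"
proof -
  have "Fhat (Phi m1 \<phi>) g h a b \<alpha>h k p z y
      = ereal (up_part (\<phi> p) (f_up g h a \<alpha>h k p z y) + down_part (\<phi> p) (f_lo g h b k p z y))"
    if "p \<in> {1..m1}" for p
    using that by (simp add: Fhat_def Phi_def phi_up_ereal phi_down_ereal)
  then show ?thesis by simp
qed

lemma assumption6_constraint_qualification:
  assumes A6: "assumption6 m1 m Ph g h a b \<alpha>h lam"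
    and sol: "is_subsol m1 m Ph g h a b \<alpha>h lam k x0 x1"
    and \<nu>w: "\<forall>p\<in>{m1<..m}. 0 \<le> \<nu> p \<and> \<nu> p * f_up g h a \<alpha>h k p x1 x0 = 0 \<and>
                 w p \<in> csubdiff (\<lambda>z. f_up g h a \<alpha>h k p z x0) x1"
    and sum0: "(\<Sum>p\<in>{m1<..m}. \<nu> p *\<^sub>R w p) = 0"
  shows "\<forall>p\<in>{m1<..m}. \<nu> p = 0"
proof -
  have "\<nu> p \<in> normal_cone {..0} (f_up g h a \<alpha>h k p x1 x0)" if "p \<in> {m1<..m}" for p
    using normal_cone_nonpos_iff \<nu>w that sol by (simp add: is_subsol_def)
  moreover have "0 \<in> msum {m1<..m} (\<lambda>p. mscale (\<nu> p) (df_up g a k p x1 x0))"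
  proof -
    have "\<forall>p\<in>{m1<..m}. \<nu> p *\<^sub>R w p \<in> mscale (\<nu> p) (df_up g a k p x1 x0)"
      using \<nu>w by (auto simp: mscale_def simp flip: df_up_eq_csubdiff)
    then show ?thesis unfolding msum_def using sum0 by force
  qed
  ultimately show ?thesis using A6 sol by (simp add: assumption6_def)
qed

lemma subproblem_kkt:
  fixes \<phi> :: "nat \<Rightarrow> real \<Rightarrow> real" and g h :: "nat \<Rightarrow> nat \<Rightarrow> 'a::euclidean_space \<Rightarrow> real"
  assumes \<phi>: "\<forall>p\<in>{1..m1}. convex_on UNIV (\<phi> p)"
    and gh: "\<forall>p\<in>{1..m}. convex_on UNIV (g k p) \<and> convex_on UNIV (h k p)"
    and "m1 \<le> m" "0 < lam"
    and sol: "is_subsol m1 m (Phi m1 \<phi>) g h a b \<alpha>h lam k x0 x1"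
    and A6: "assumption6 m1 m (Phi m1 \<phi>) g h a b \<alpha>h lam"
  shows "\<exists>\<mu> \<nu> v w.
     (\<forall>p\<in>{1..m1}. \<mu> (Inl p) \<in> csubdiff (up_part (\<phi> p)) (f_up g h a \<alpha>h k p x1 x0) \<and>
        v (Inl p) \<in> df_up g a k p x1 x0 \<and>
        - \<mu> (Inr p) \<in> csubdiff (down_part (\<phi> p)) (f_lo g h b k p x1 x0) \<and>
        - v (Inr p) \<in> df_lo h b k p x1 x0) \<and>
     (\<forall>p\<in>{m1<..m}. \<nu> p \<in> esubdiff ind_nonpos (f_up g h a \<alpha>h k p x1 x0) \<and>
        w p \<in> df_up g a k p x1 x0) \<and>
     (\<Sum>j\<in>{1..m1} <+> {1..m1}. \<mu> j *\<^sub>R v j) + (\<Sum>p\<in>{m1<..m}. \<nu> p *\<^sub>R w p) + lam *\<^sub>R (x1 - x0) = 0"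
proof -
  define \<theta> where "\<theta> = case_sum (\<lambda>p. up_part (\<phi> p)) (\<lambda>p t. down_part (\<phi> p) (- t))"
  define H where "H = case_sum (\<lambda>p z. f_up g h a \<alpha>h k p z x0) (\<lambda>p z. - f_lo g h b k p z x0)"
  define C where "C = (\<lambda>p z. f_up g h a \<alpha>h k p z x0)"
  define q where "q = (\<lambda>z. lam / 2 * (norm (z - x0))\<^sup>2)"
  have \<theta>H: "convex_on UNIV (\<theta> j) \<and> mono (\<theta> j) \<and> convex_on UNIV (H j)"
    if j: "j \<in> {1..m1} <+> {1..m1}" for j
  proof -
    obtain p where p: "j = Inl p \<or> j = Inr p" and "p \<in> {1..m1}"
      using j by blast
    then have "convex_on UNIV (\<phi> p)" "convex_on UNIV (g k p)" "convex_on UNIV (h k p)"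
      using \<phi> gh \<open>m1 \<le> m\<close> by auto
    then show ?thesis
      using p up_part_convex_mono down_part_reflect_convex_mono convex_on_f_up convex_on_neg_f_lo
      by (auto simp: \<theta>_def H_def)
  qed
  have C: "convex_on UNIV (C p) \<and> C p x1 \<le> 0" if p: "p \<in> {m1<..m}" for p
  proof -
    have "convex_on UNIV (g k p)" using gh p by auto
    then show ?thesis using sol p by (simp add: C_def is_subsol_def convex_on_f_up)
  qed
  have q: "convex_on UNIV q"
    unfolding q_def using \<open>0 < lam\<close> by (intro convex_on_cmul convex_on_sqdist) simp
  have sum_\<theta>H: "(\<Sum>j\<in>{1..m1} <+> {1..m1}. \<theta> j (H j z))
      = (\<Sum>p\<in>{1..m1}. up_part (\<phi> p) (f_up g h a \<alpha>h k p z x0) + down_part (\<phi> p) (f_lo g h b k p z x0))" for z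
    by (simp add: \<theta>_def H_def sum.Plus sum.distrib comp_def)
  have min: "(\<Sum>j\<in>{1..m1} <+> {1..m1}. \<theta> j (H j x1)) + q x1 \<le> (\<Sum>j\<in>{1..m1} <+> {1..m1}. \<theta> j (H j z)) + q z"
    if "\<forall>p\<in>{m1<..m}. C p z \<le> 0" for z
  proof -
    have "(\<Sum>p\<in>{1..m1}. Fhat (Phi m1 \<phi>) g h a b \<alpha>h k p x1 x0) + ereal (q x1)
        \<le> (\<Sum>p\<in>{1..m1}. Fhat (Phi m1 \<phi>) g h a b \<alpha>h k p z x0) + ereal (q z)"
      using sol that unfolding is_subsol_def C_def q_def by blast
    then show ?thesis unfolding Fhat_sum_ereal sum_\<theta>H by simp
  qed
  have CQ: "\<forall>p\<in>{m1<..m}. \<nu> p = 0"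
    if "\<forall>p\<in>{m1<..m}. 0 \<le> \<nu> p \<and> \<nu> p * C p x1 = 0 \<and> w p \<in> csubdiff (C p) x1"
      and "(\<Sum>p\<in>{m1<..m}. \<nu> p *\<^sub>R w p) = 0" for \<nu> w
    using assumption6_constraint_qualification[OF A6 sol] that by (simp add: C_def)
  obtain \<mu> \<nu> v w v0 where
    \<mu>v: "\<forall>j\<in>{1..m1} <+> {1..m1}. \<mu> j \<in> csubdiff (\<theta> j) (H j x1) \<and> v j \<in> csubdiff (H j) x1"
    and \<nu>w: "\<forall>p\<in>{m1<..m}. 0 \<le> \<nu> p \<and> \<nu> p * C p x1 = 0 \<and> w p \<in> csubdiff (C p) x1"
    and v0: "v0 \<in> csubdiff q x1"
    and sum0: "(\<Sum>j\<in>{1..m1} <+> {1..m1}. \<mu> j *\<^sub>R v j) + (\<Sum>p\<in>{m1<..m}. \<nu> p *\<^sub>R w p) + v0 = 0"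
  proof -
    have "\<exists>\<mu> \<nu> v w v0.
        (\<forall>j\<in>{1..m1} <+> {1..m1}. \<mu> j \<in> csubdiff (\<theta> j) (H j x1) \<and> v j \<in> csubdiff (H j) x1) \<and>
        (\<forall>p\<in>{m1<..m}. 0 \<le> \<nu> p \<and> \<nu> p * C p x1 = 0 \<and> w p \<in> csubdiff (C p) x1) \<and>
        v0 \<in> csubdiff q x1 \<and>
        (\<Sum>j\<in>{1..m1} <+> {1..m1}. \<mu> j *\<^sub>R v j) + (\<Sum>p\<in>{m1<..m}. \<nu> p *\<^sub>R w p) + v0 = 0"
      by (rule kkt_composite) (fact \<theta>H C q min CQ | simp)+
    then show ?thesis using that by blast
  qed
  have "v0 = lam *\<^sub>R (x1 - x0)"
    using csubdiff_scaled_sqdist[OF \<open>0 < lam\<close>] v0 by (simp add: q_def)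
  moreover have "\<forall>p\<in>{m1<..m}. \<nu> p \<in> esubdiff ind_nonpos (f_up g h a \<alpha>h k p x1 x0) \<and>
        w p \<in> df_up g a k p x1 x0"
    using \<nu>w C esubdiff_ind_nonpos by (simp add: C_def flip: df_up_eq_csubdiff)
  moreover have "\<forall>p\<in>{1..m1}. \<mu> (Inl p) \<in> csubdiff (up_part (\<phi> p)) (f_up g h a \<alpha>h k p x1 x0) \<and>
        v (Inl p) \<in> df_up g a k p x1 x0 \<and>
        - \<mu> (Inr p) \<in> csubdiff (down_part (\<phi> p)) (f_lo g h b k p x1 x0) \<and>
        - v (Inr p) \<in> df_lo h b k p x1 x0"
  proof
    fix p assume "p \<in> {1..m1}"
    then have "Inl p \<in> {1..m1} <+> {1..m1}" "Inr p \<in> {1..m1} <+> {1..m1}" by auto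
    then have "\<mu> (Inl p) \<in> csubdiff (\<theta> (Inl p)) (H (Inl p) x1) \<and> v (Inl p) \<in> csubdiff (H (Inl p)) x1"
      "\<mu> (Inr p) \<in> csubdiff (\<theta> (Inr p)) (H (Inr p) x1) \<and> v (Inr p) \<in> csubdiff (H (Inr p)) x1"
      using \<mu>v by blast+
    then have l: "\<mu> (Inl p) \<in> csubdiff (up_part (\<phi> p)) (f_up g h a \<alpha>h k p x1 x0)"
        "v (Inl p) \<in> csubdiff (\<lambda>z. f_up g h a \<alpha>h k p z x0) x1"
      and r: "\<mu> (Inr p) \<in> csubdiff (\<lambda>t. down_part (\<phi> p) (- t)) (- f_lo g h b k p x1 x0)"
        "v (Inr p) \<in> csubdiff (\<lambda>z. - f_lo g h b k p z x0) x1"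
      by (simp_all add: \<theta>_def H_def)
    show "\<mu> (Inl p) \<in> csubdiff (up_part (\<phi> p)) (f_up g h a \<alpha>h k p x1 x0) \<and>
        v (Inl p) \<in> df_up g a k p x1 x0 \<and>
        - \<mu> (Inr p) \<in> csubdiff (down_part (\<phi> p)) (f_lo g h b k p x1 x0) \<and>
        - v (Inr p) \<in> df_lo h b k p x1 x0"
      using l r(2) csubdiff_reflect[THEN iffD1, OF r(1)]
      by (simp add: df_lo_eq_csubdiff[of h b k p x1 x0 g] flip: df_up_eq_csubdiff)
  qed
  ultimately show ?thesis using sum0 by blast
qed

lemma Yset_nonempty:
  fixes \<phi> :: "nat \<Rightarrow> real \<Rightarrow> real" and g h :: "nat \<Rightarrow> nat \<Rightarrow> 'a::euclidean_space \<Rightarrow> real"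
  assumes \<phi>: "\<forall>p\<in>{1..m1}. convex_on UNIV (\<phi> p)"
    and gh: "\<forall>p\<in>{1..m}. convex_on UNIV (g k p) \<and> convex_on UNIV (h k p)"
    and "m1 \<le> m" "0 < lam"
    and sol: "is_subsol m1 m (Phi m1 \<phi>) g h a b \<alpha>h lam k (xi k (ik k)) (xi k (Suc (ik k)))"
    and A6: "assumption6 m1 m (Phi m1 \<phi>) g h a b \<alpha>h lam"
  shows "Yset m (Phi m1 \<phi>) g h a b \<alpha>h lam xi ik k \<noteq> {}"
proof -
  define x0 x1 where "x0 = xi k (ik k)" and "x1 = xi k (Suc (ik k))"
  obtain \<mu> \<nu> v w where
    obj: "\<forall>p\<in>{1..m1}. \<mu> (Inl p) \<in> csubdiff (up_part (\<phi> p)) (f_up g h a \<alpha>h k p x1 x0) \<and>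
        v (Inl p) \<in> df_up g a k p x1 x0 \<and>
        - \<mu> (Inr p) \<in> csubdiff (down_part (\<phi> p)) (f_lo g h b k p x1 x0) \<and>
        - v (Inr p) \<in> df_lo h b k p x1 x0"
    and con: "\<forall>p\<in>{m1<..m}. \<nu> p \<in> esubdiff ind_nonpos (f_up g h a \<alpha>h k p x1 x0) \<and>
        w p \<in> df_up g a k p x1 x0"
    and sum0: "(\<Sum>j\<in>{1..m1} <+> {1..m1}. \<mu> j *\<^sub>R v j) + (\<Sum>p\<in>{m1<..m}. \<nu> p *\<^sub>R w p)
        + lam *\<^sub>R (x1 - x0) = 0"
    using subproblem_kkt[OF \<phi> gh \<open>m1 \<le> m\<close> \<open>0 < lam\<close> sol[folded x0_def x1_def] A6] by blast
  have "df_lo h b k p x1 x0 \<noteq> {}" if "p \<in> {m1<..m}" for p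
  proof -
    have "convex_on UNIV (h k p)" using gh that by auto
    then show ?thesis using csubdiff_nonempty by (simp add: df_lo_def)
  qed
  then have "\<forall>p\<in>{m1<..m}. \<exists>u. u \<in> df_lo h b k p x1 x0" by blast
  then obtain w' where w': "\<forall>p\<in>{m1<..m}. w' p \<in> df_lo h b k p x1 x0"
    by metis
  define y where "y p = (if p \<le> m1 then (\<mu> (Inl p), - \<mu> (Inr p)) else (\<nu> p, 0))" for p
  define e where "e p = (if p \<le> m1 then \<mu> (Inl p) *\<^sub>R v (Inl p) + \<mu> (Inr p) *\<^sub>R v (Inr p)
    else \<nu> p *\<^sub>R w p)" for p
  have e: "e p \<in> {fst (y p) *\<^sub>R u + snd (y p) *\<^sub>R w | u w. u \<in> df_up g a k p x1 x0 \<and> w \<in> df_lo h b k p x1 x0}"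
    if "p \<in> {1..m}" for p
  proof (cases "p \<le> m1")
    case True
    then have "e p = fst (y p) *\<^sub>R v (Inl p) + snd (y p) *\<^sub>R (- v (Inr p))"
      by (simp add: y_def e_def)
    moreover have "v (Inl p) \<in> df_up g a k p x1 x0" "- v (Inr p) \<in> df_lo h b k p x1 x0"
      using obj that True by auto
    ultimately show ?thesis by blast
  next
    case False
    then have "e p = fst (y p) *\<^sub>R w p + snd (y p) *\<^sub>R w' p"
      by (simp add: y_def e_def)
    moreover have "w p \<in> df_up g a k p x1 x0" "w' p \<in> df_lo h b k p x1 x0"
      using con w' that False by auto
    ultimately show ?thesis by blast
  qed
  have "{1..m} = {1..m1} \<union> {m1<..m}" "{1..m1} \<inter> {m1<..m} = {}"
    using \<open>m1 \<le> m\<close> by auto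
  then have "(\<Sum>p\<in>{1..m}. e p) = (\<Sum>p\<in>{1..m1}. e p) + (\<Sum>p\<in>{m1<..m}. e p)"
    by (simp add: sum.union_disjoint)
  also have "\<dots> = (\<Sum>j\<in>{1..m1} <+> {1..m1}. \<mu> j *\<^sub>R v j) + (\<Sum>p\<in>{m1<..m}. \<nu> p *\<^sub>R w p)"
    by (simp add: e_def sum.Plus sum.distrib comp_def)
  finally have "(\<Sum>p\<in>{1..m}. e p) + lam *\<^sub>R (x1 - x0) = 0"
    using sum0 by simp
  moreover have "\<forall>p\<in>{1..m}. fst (y p) \<in> esubdiff (phi_up (Phi m1 \<phi> p)) (f_up g h a \<alpha>h k p x1 x0)
      \<and> snd (y p) \<in> esubdiff (phi_down (Phi m1 \<phi> p)) (f_lo g h b k p x1 x0)"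
    using obj con
    by (auto simp: y_def Phi_def phi_up_ereal phi_down_ereal esubdiff_ereal esubdiff_zero
        phi_up_ind_nonpos phi_down_ind_nonpos)
  ultimately have "y \<in> Yset m (Phi m1 \<phi>) g h a b \<alpha>h lam xi ik k"
    using e unfolding Yset_def Let_def msum_def x0_def[symmetric] x1_def[symmetric]
    by (auto intro!: image_eqI[where x = "\<Sum>p\<in>{1..m}. e p"])
  then show ?thesis by blast
qed

lemma f_up_lower_bound:
  assumes "a k p y \<in> csubdiff (h k p) y"
  shows "fk g h k p x + sigma \<alpha>h k p \<le> f_up g h a \<alpha>h k p x y"
  using assms[unfolded csubdiff_def, simplified, rule_format, of x] by (simp add: fk_def f_up_def)

lemma f_lo_upper_bound:
  assumes "b k p y \<in> csubdiff (g k p) y"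
  shows "f_lo g h b k p x y \<le> fk g h k p x"
  using assms[unfolded csubdiff_def, simplified, rule_format, of x] by (simp add: fk_def f_lo_def)

lemma csubdiff_subset_beta:
  assumes "norm (z - x) \<le> \<beta>"
  shows "csubdiff f z \<subseteq> csubdiff_beta f \<beta> x"
  using assms by (auto simp: csubdiff_beta_def)

lemma df_up_subset_beta:
  assumes "a k p y \<in> csubdiff (h k p) y" "norm (x - y) \<le> \<beta>"
  shows "df_up g a k p x y \<subseteq> mdiff (csubdiff_beta (g k p) \<beta> x) (csubdiff_beta (h k p) \<beta> x)"
proof -
  have "csubdiff (g k p) x \<subseteq> csubdiff_beta (g k p) \<beta> x"
    using assms(2) order_trans[OF norm_ge_zero] by (intro csubdiff_subset_beta) auto
  moreover have "a k p y \<in> csubdiff_beta (h k p) \<beta> x"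
    using assms csubdiff_subset_beta[of y x \<beta>] by (auto simp: norm_minus_commute)
  ultimately show ?thesis by (auto simp: df_up_def mdiff_def)
qed

lemma df_lo_subset_beta:
  assumes "b k p y \<in> csubdiff (g k p) y" "norm (x - y) \<le> \<beta>"
  shows "df_lo h b k p x y \<subseteq> mdiff (csubdiff_beta (g k p) \<beta> x) (csubdiff_beta (h k p) \<beta> x)"
proof -
  have "csubdiff (h k p) x \<subseteq> csubdiff_beta (h k p) \<beta> x"
    using assms(2) order_trans[OF norm_ge_zero] by (intro csubdiff_subset_beta) auto
  moreover have "b k p y \<in> csubdiff_beta (g k p) \<beta> x"
    using assms csubdiff_subset_beta[of y x \<beta>] by (auto simp: norm_minus_commute)
  ultimately show ?thesis by (auto simp: df_lo_def mdiff_def)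
qed

lemma esubdiff_subset_beta:
  assumes "\<bar>z - t\<bar> \<le> \<beta>"
  shows "esubdiff \<psi> z \<subseteq> esubdiff_beta \<psi> \<beta> t"
  using assms by (auto simp: esubdiff_beta_def abs_minus_commute)

definition approx_stationarity_terms ::
    "(nat \<Rightarrow> real \<Rightarrow> ereal) \<Rightarrow> (nat \<Rightarrow> nat \<Rightarrow> 'a::real_inner \<Rightarrow> real) \<Rightarrow> (nat \<Rightarrow> nat \<Rightarrow> 'a \<Rightarrow> real)
      \<Rightarrow> real \<Rightarrow> nat \<Rightarrow> nat \<Rightarrow> 'a \<Rightarrow> 'a set" where
  "approx_stationarity_terms Ph g h \<beta> k p x =
     (let A = mdiff (csubdiff_beta (g k p) \<beta> x) (csubdiff_beta (h k p) \<beta> x) in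
      \<Union>{ {y1 *\<^sub>R u1 + y2 *\<^sub>R u2 | u1 u2. u1 \<in> A \<and> u2 \<in> A} | y1 y2.
           y1 \<in> esubdiff_beta (phi_up (Ph p)) \<beta> (fk g h k p x) \<and>
           y2 \<in> esubdiff_beta (phi_down (Ph p)) \<beta> (fk g h k p x)})"

lemma weakly_A_stationary_iff:
  "weakly_A_stationary m Ph g h \<eta> \<beta> kb x \<longleftrightarrow>
     (\<exists>k\<ge>kb. dist0 (msum {1..m} (\<lambda>p. approx_stationarity_terms Ph g h \<beta> k p x)) \<le> \<eta>)"
  by (simp add: weakly_A_stationary_def approx_stationarity_terms_def)

lemma dist0_le:
  assumes "v \<in> S" "norm v \<le> \<eta>"
  shows "dist0 S \<le> ereal \<eta>"
proof -
  have "infdist 0 S \<le> norm v" using infdist_le[OF assms(1), of 0] by simp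
  then show ?thesis using assms by (auto simp: dist0_def)
qed

lemma multiplier_term_in_approx_stationarity_terms:
  assumes y1: "y1 \<in> esubdiff (phi_up (Ph p)) (f_up g h a \<alpha>h k p x y)"
    and y2: "y2 \<in> esubdiff (phi_down (Ph p)) (f_lo g h b k p x y)"
    and u: "u \<in> df_up g a k p x y" and w: "w \<in> df_lo h b k p x y"
    and ab: "a k p y \<in> csubdiff (h k p) y" "b k p y \<in> csubdiff (g k p) y"
    and xy: "norm (x - y) \<le> \<beta>"
    and up: "\<bar>f_up g h a \<alpha>h k p x y - fk g h k p x\<bar> \<le> \<beta>"
    and lo: "\<bar>f_lo g h b k p x y - fk g h k p x\<bar> \<le> \<beta> \<or> phi_down (Ph p) = (\<lambda>_. 0)"
  shows "y1 *\<^sub>R u + y2 *\<^sub>R w \<in> approx_stationarity_terms Ph g h \<beta> k p x"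
proof -
  have "y1 \<in> esubdiff_beta (phi_up (Ph p)) \<beta> (fk g h k p x)"
    using esubdiff_subset_beta[OF up] y1 by blast
  moreover have "y2 \<in> esubdiff_beta (phi_down (Ph p)) \<beta> (fk g h k p x)"
    using lo
  proof
    assume down: "phi_down (Ph p) = (\<lambda>_. 0)"
    have "0 \<le> \<beta>" using xy order_trans[OF norm_ge_zero] by blast
    then have "esubdiff (phi_down (Ph p)) (fk g h k p x) \<subseteq> esubdiff_beta (phi_down (Ph p)) \<beta> (fk g h k p x)"
      by (intro esubdiff_subset_beta) simp
    moreover have "y2 \<in> esubdiff (phi_down (Ph p)) (fk g h k p x)"
      using y2 down by (simp add: esubdiff_zero)
    ultimately show ?thesis by blast
  qed (use esubdiff_subset_beta y2 in blast)
  moreover have "u \<in> mdiff (csubdiff_beta (g k p) \<beta> x) (csubdiff_beta (h k p) \<beta> x)"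
    using df_up_subset_beta[of a k p y h x \<beta> g] ab(1) xy u by blast
  moreover have "w \<in> mdiff (csubdiff_beta (g k p) \<beta> x) (csubdiff_beta (h k p) \<beta> x)"
    using df_lo_subset_beta[of b k p y g x \<beta> h] ab(2) xy w by blast
  ultimately show ?thesis
    unfolding approx_stationarity_terms_def Let_def by blast
qed

lemma phi_down_outside_I2:
  assumes "p \<in> {1..m}" "p \<notin> I2 m Ph"
  shows "phi_down (Ph p) = (\<lambda>_. 0)"
  using assms by (simp add: I2_def I1_def phi_down_def)

lemma weakly_A_stationary_of_Yset:
  fixes g h :: "nat \<Rightarrow> nat \<Rightarrow> 'a::euclidean_space \<Rightarrow> real"
  assumes y: "y \<in> Yset m Ph g h a b \<alpha>h lam xi ik k"
    and ab: "\<forall>p\<in>{1..m}. a k p (xi k (ik k)) \<in> csubdiff (h k p) (xi k (ik k)) \<and>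
                        b k p (xi k (ik k)) \<in> csubdiff (g k p) (xi k (ik k))"
    and stop: "inner_stop m Ph g h a b \<alpha>h lam \<epsilon> \<delta> ell xi k (ik k)"
    and \<sigma>: "\<forall>p\<in>{1..m}. 0 \<le> sigma \<alpha>h k p \<and> sigma \<alpha>h k p + \<epsilon> k \<le> \<beta>" and "0 \<le> \<epsilon> k"
    and step: "\<delta> k / (lam + ell k) \<le> \<beta>" "\<delta> k \<le> \<eta>"
    and pos: "0 < lam" "0 < ell k" "0 \<le> \<delta> k"
    and "kbar \<le> k"
  shows "weakly_A_stationary m Ph g h (ereal \<eta>) \<beta> kbar (xi k (Suc (ik k)))"
proof -
  define x0 x1 where "x0 = xi k (ik k)" and "x1 = xi k (Suc (ik k))"
  have dx: "norm (x1 - x0) \<le> \<delta> k / (lam + ell k)"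
    using stop by (simp add: inner_stop_def x0_def x1_def)
  have y12: "\<forall>p\<in>{1..m}. fst (y p) \<in> esubdiff (phi_up (Ph p)) (f_up g h a \<alpha>h k p x1 x0) \<and>
      snd (y p) \<in> esubdiff (phi_down (Ph p)) (f_lo g h b k p x1 x0)"
    and "0 \<in> (\<lambda>z. z + lam *\<^sub>R (x1 - x0)) ` msum {1..m} (\<lambda>p. {fst (y p) *\<^sub>R u + snd (y p) *\<^sub>R w | u w.
      u \<in> df_up g a k p x1 x0 \<and> w \<in> df_lo h b k p x1 x0})"
    using y by (simp_all add: Yset_def Let_def x0_def x1_def)
  then obtain e where e: "\<forall>p\<in>{1..m}. e p \<in> {fst (y p) *\<^sub>R u + snd (y p) *\<^sub>R w | u w.
      u \<in> df_up g a k p x1 x0 \<and> w \<in> df_lo h b k p x1 x0}"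
    and sum0: "(\<Sum>p\<in>{1..m}. e p) + lam *\<^sub>R (x1 - x0) = 0"
    unfolding msum_def by auto
  have "e p \<in> approx_stationarity_terms Ph g h \<beta> k p x1" if p: "p \<in> {1..m}" for p
  proof -
    obtain u w where e_p: "e p = fst (y p) *\<^sub>R u + snd (y p) *\<^sub>R w"
      and uw: "u \<in> df_up g a k p x1 x0" "w \<in> df_lo h b k p x1 x0"
      using e p by blast
    have ab_p: "a k p x0 \<in> csubdiff (h k p) x0" "b k p x0 \<in> csubdiff (g k p) x0"
      using ab p by (simp_all add: x0_def)
    have \<sigma>_p: "0 \<le> sigma \<alpha>h k p" "sigma \<alpha>h k p + \<epsilon> k \<le> \<beta>" using \<sigma> p by auto
    have "f_up g h a \<alpha>h k p x1 x0 \<le> fk g h k p x1 + sigma \<alpha>h k p + \<epsilon> k"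
      using stop p by (simp add: inner_stop_def x0_def x1_def)
    then have up: "\<bar>f_up g h a \<alpha>h k p x1 x0 - fk g h k p x1\<bar> \<le> \<beta>"
      using f_up_lower_bound[where a = a and h = h and k = k and p = p and y = x0 and g = g and x = x1 and \<alpha>h = \<alpha>h] ab_p(1) \<sigma>_p by (simp add: abs_le_iff)
    have lo: "\<bar>f_lo g h b k p x1 x0 - fk g h k p x1\<bar> \<le> \<beta> \<or> phi_down (Ph p) = (\<lambda>_. 0)"
    proof (cases "p \<in> I2 m Ph")
      case True
      then have "fk g h k p x1 - \<epsilon> k \<le> f_lo g h b k p x1 x0"
        using stop by (simp add: inner_stop_def x0_def x1_def)
      then show ?thesis
        using f_lo_upper_bound[where b = b and g = g and k = k and p = p and y = x0 and h = h and x = x1] ab_p(2) \<sigma>_p \<open>0 \<le> \<epsilon> k\<close> by (simp add: abs_le_iff)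
    qed (use phi_down_outside_I2 p in blast)
    have "norm (x1 - x0) \<le> \<beta>" using dx step by simp
    then show ?thesis
      unfolding e_p using y12 p
      by (intro multiplier_term_in_approx_stationarity_terms[where Ph = Ph and p = p and g = g and h = h
            and a = a and b = b and k = k and x = x1 and y = x0 and \<alpha>h = \<alpha>h and \<beta> = \<beta>, OF _ _ uw ab_p _ up lo])
        (simp_all add: x0_def)
  qed
  then have "(\<Sum>p\<in>{1..m}. e p) \<in> msum {1..m} (\<lambda>p. approx_stationarity_terms Ph g h \<beta> k p x1)"
    by (auto simp: msum_def)
  moreover have "norm (\<Sum>p\<in>{1..m}. e p) \<le> \<eta>"
  proof -
    have "norm (\<Sum>p\<in>{1..m}. e p) = lam * norm (x1 - x0)"
      using sum0 pos by (simp add: eq_neg_iff_add_eq_0[symmetric])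
    also have "\<dots> \<le> lam * (\<delta> k / (lam + ell k))"
      using dx pos(1) by (intro mult_left_mono) auto
    also have "\<dots> \<le> \<delta> k"
      using pos by (simp add: field_simps mult_left_mono)
    finally show ?thesis using step by simp
  qed
  ultimately show ?thesis
    unfolding weakly_A_stationary_iff x1_def[symmetric] using \<open>kbar \<le> k\<close> dist0_le by blast
qed

lemma assumption2_summable:
  assumes "assumption2 m1 m g h \<alpha>h x0" "p \<in> {1..m}"
  shows "summable (\<alpha>h p) \<and> (\<forall>j. 0 \<le> \<alpha>h p j)"
proof (cases "p \<le> m1")
  case True
  then have "\<alpha>h p = (\<lambda>_. 0)" using assms by (auto simp: assumption2_def)
  then show ?thesis by simp
next
  case False
  then show ?thesis using assms by (auto simp: assumption2_def)
qed

lemma sigma_nonneg: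
  assumes "summable (\<alpha>h p)" "\<forall>j. 0 \<le> \<alpha>h p j"
  shows "0 \<le> sigma \<alpha>h k p"
  unfolding sigma_def using assms by (intro suminf_nonneg summable_ignore_initial_segment) auto

lemma exists_index_small_parameters:
  fixes \<epsilon> \<delta> :: "nat \<Rightarrow> real" and \<beta> \<eta> :: real
  assumes "1 \<le> m" and \<alpha>h: "\<forall>p\<in>{1..m}. summable (\<alpha>h p)"
    and "\<epsilon> \<longlonglongrightarrow> 0" "(\<lambda>k. \<delta> k / (lam + ell k)) \<longlonglongrightarrow> 0" "\<delta> \<longlonglongrightarrow> 0"
    and "0 < \<beta>" "0 < \<eta>"
  shows "\<exists>k0\<ge>kbar. (MAX p\<in>{1..m}. sigma \<alpha>h k0 p) + \<epsilon> k0 \<le> \<beta> \<and>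
           \<delta> k0 / (lam + ell k0) \<le> \<beta> \<and> \<delta> k0 \<le> \<eta>"
proof -
  have "\<forall>\<^sub>F k in sequentially. sigma \<alpha>h k p < \<beta> / 2" if "p \<in> {1..m}" for p
    using suminf_exist_split2[OF \<alpha>h[rule_format, OF that]] \<open>0 < \<beta>\<close>
    by (intro order_tendstoD(2)) (auto simp: sigma_def)
  then have "\<forall>\<^sub>F k in sequentially. kbar \<le> k \<and> (\<forall>p\<in>{1..m}. sigma \<alpha>h k p < \<beta> / 2) \<and>
      \<epsilon> k < \<beta> / 2 \<and> \<delta> k / (lam + ell k) < \<beta> \<and> \<delta> k < \<eta>"
    using assms
    by (intro eventually_conj eventually_ge_at_top eventually_ball_finite order_tendstoD(2)) auto
  then obtain k0 where "kbar \<le> k0" "\<forall>p\<in>{1..m}. sigma \<alpha>h k0 p < \<beta> / 2"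
    "\<epsilon> k0 < \<beta> / 2" "\<delta> k0 / (lam + ell k0) < \<beta>" "\<delta> k0 < \<eta>"
    unfolding eventually_sequentially by blast
  moreover have "(MAX p\<in>{1..m}. sigma \<alpha>h k0 p) \<le> \<beta> / 2"
    using calculation(2) \<open>1 \<le> m\<close> by (intro Max.boundedI) auto
  ultimately show ?thesis by (intro exI[of _ k0]) auto
qed

lemma weakly_A_stationary_mono:
  assumes "weakly_A_stationary m Ph g h \<eta> \<beta> kb x" "\<eta> \<le> \<eta>'"
  shows "weakly_A_stationary m Ph g h \<eta>' \<beta> kb x"
  using assms by (auto simp: weakly_A_stationary_def intro: order_trans)

theorem proposition4p8:
  fixes m1 m :: nat
    and \<phi> :: "nat \<Rightarrow> real \<Rightarrow> real"
    and f :: "nat \<Rightarrow> 'a::euclidean_space \<Rightarrow> real"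
    and g h :: "nat \<Rightarrow> nat \<Rightarrow> 'a \<Rightarrow> real"
    and \<alpha>h :: "nat \<Rightarrow> nat \<Rightarrow> real"
    and ell \<epsilon> \<delta> :: "nat \<Rightarrow> real"
    and lam :: real
    and a b :: "nat \<Rightarrow> nat \<Rightarrow> 'a \<Rightarrow> 'a"
    and xs :: "nat \<Rightarrow> 'a" and xi :: "nat \<Rightarrow> nat \<Rightarrow> 'a" and ik :: "nat \<Rightarrow> nat"
    and \<eta> \<beta> :: real and kbar :: nat
  assumes "m1 \<le> m" and "1 \<le> m"
    and "\<forall>p\<in>{1..m1}. convex_on UNIV (\<phi> p)"
    and "assumption1 m (Phi m1 \<phi>) f g h"
    and "assumption2 m1 m g h \<alpha>h (xs 0)"
    and "assumption3 m g h ell"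
    and "assumption4 m (Phi m1 \<phi>) g h"
    and "assumption5 m (Phi m1 \<phi>) f g h"
    and "prox_ADC m1 m (Phi m1 \<phi>) g h a b \<alpha>h lam \<epsilon> \<delta> ell xs xi ik"
    and "assumption6 m1 m (Phi m1 \<phi>) g h a b \<alpha>h lam"
    and "bounded (range xs)"
    and "\<forall>x\<in>(\<Inter>p\<in>{1..m}. domF (Phi m1 \<phi>) f p). \<forall>p\<in>I2 m (Phi m1 \<phi>). hsubdiff_A g h p x = {0}"
    and "\<eta> > 0" and "\<beta> > 0"
  shows "\<exists>k0\<ge>kbar.
           (MAX p\<in>{1..m}. (\<Sum>j. \<alpha>h p (j + k0))) + \<epsilon> k0 \<le> \<beta> \<and>
           \<delta> k0 / (lam + ell k0) \<le> \<beta> \<and> \<delta> k0 \<le> \<eta> \<and>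
           weakly_A_stationary m (Phi m1 \<phi>) g h
             (ereal \<eta> * max 1 (ereal (sqrt (2 * real m)) *
                (SUP k. SUP y\<in>Yset m (Phi m1 \<phi>) g h a b \<alpha>h lam xi ik k. ereal (ynorm m y))))
             \<beta> kbar (xi k0 (Suc (ik k0)))"
proof -
  let ?Ph = "Phi m1 \<phi>"
  note prox = assms(9)[unfolded prox_ADC_def]
  have lam: "0 < lam" and \<epsilon>: "\<forall>k. 0 < \<epsilon> k" "\<epsilon> \<longlonglongrightarrow> 0" and \<delta>: "\<forall>k. 0 < \<delta> k" "\<delta> \<longlonglongrightarrow> 0"
    and step: "(\<lambda>k. \<delta> k / (lam + ell k)) \<longlonglongrightarrow> 0"
    and ab: "\<forall>k. \<forall>p\<in>{1..m}. \<forall>y. a k p y \<in> csubdiff (h k p) y \<and> b k p y \<in> csubdiff (g k p) y"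
    and iter: "\<forall>k. is_subsol m1 m ?Ph g h a b \<alpha>h lam k (xi k (ik k)) (xi k (Suc (ik k))) \<and>
                 inner_stop m ?Ph g h a b \<alpha>h lam \<epsilon> \<delta> ell xi k (ik k)"
    using prox by blast+
  have gh: "\<forall>p\<in>{1..m}. convex_on UNIV (g k p) \<and> convex_on UNIV (h k p)" for k
    using assms(4) by (simp add: assumption1_def)
  have \<alpha>h: "\<forall>p\<in>{1..m}. summable (\<alpha>h p) \<and> (\<forall>j. 0 \<le> \<alpha>h p j)"
    using assumption2_summable[OF assms(5)] by blast
  have ell: "0 < ell k" for k using assms(6) by (simp add: assumption3_def)
  obtain k0 where "kbar \<le> k0" and k0: "(MAX p\<in>{1..m}. sigma \<alpha>h k0 p) + \<epsilon> k0 \<le> \<beta>"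
    "\<delta> k0 / (lam + ell k0) \<le> \<beta>" "\<delta> k0 \<le> \<eta>"
    using exists_index_small_parameters[OF assms(2) _ \<epsilon>(2) step \<delta>(2) assms(14,13), of \<alpha>h kbar] \<alpha>h
    by auto
  obtain y where y: "y \<in> Yset m ?Ph g h a b \<alpha>h lam xi ik k0"
    using Yset_nonempty[OF assms(3) gh assms(1) lam _ assms(10)] iter by blast
  have \<sigma>: "\<forall>p\<in>{1..m}. 0 \<le> sigma \<alpha>h k0 p \<and> sigma \<alpha>h k0 p + \<epsilon> k0 \<le> \<beta>"
  proof
    fix p assume p: "p \<in> {1..m}"
    have "0 \<le> sigma \<alpha>h k0 p" using sigma_nonneg \<alpha>h p by blast
    moreover have "sigma \<alpha>h k0 p \<le> (MAX p\<in>{1..m}. sigma \<alpha>h k0 p)" using p by (intro Max_ge) auto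
    ultimately show "0 \<le> sigma \<alpha>h k0 p \<and> sigma \<alpha>h k0 p + \<epsilon> k0 \<le> \<beta>" using k0(1) by linarith
  qed
  have ab0: "\<forall>p\<in>{1..m}. a k0 p (xi k0 (ik k0)) \<in> csubdiff (h k0 p) (xi k0 (ik k0)) \<and>
      b k0 p (xi k0 (ik k0)) \<in> csubdiff (g k0 p) (xi k0 (ik k0))"
    using ab by blast
  have stop: "inner_stop m ?Ph g h a b \<alpha>h lam \<epsilon> \<delta> ell xi k0 (ik k0)"
    using iter by blast
  have "weakly_A_stationary m ?Ph g h (ereal \<eta>) \<beta> kbar (xi k0 (Suc (ik k0)))"
    using \<epsilon>(1) \<delta>(1)
    by (intro weakly_A_stationary_of_Yset[OF y ab0 stop \<sigma> _ k0(2,3) lam ell[of k0] _ \<open>kbar \<le> k0\<close>])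
      (simp_all add: less_imp_le)
  moreover have "ereal \<eta> \<le> ereal \<eta> * max 1 (ereal (sqrt (2 * real m)) *
      (SUP k. SUP y\<in>Yset m ?Ph g h a b \<alpha>h lam xi ik k. ereal (ynorm m y)))"
    using ereal_mult_left_mono[of 1 _ "ereal \<eta>"] assms(13) by simp
  ultimately have "weakly_A_stationary m ?Ph g h (ereal \<eta> * max 1 (ereal (sqrt (2 * real m)) *
      (SUP k. SUP y\<in>Yset m ?Ph g h a b \<alpha>h lam xi ik k. ereal (ynorm m y)))) \<beta> kbar (xi k0 (Suc (ik k0)))"
    by (rule weakly_A_stationary_mono)
  then show ?thesis using \<open>kbar \<le> k0\<close> k0 unfolding sigma_def by blast
qed

end
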